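(* On a priori popularity instances with $n+1$ agents, the AVD mechanism whose default node $t$ is a node of highest expected in-degree (i.e. of highest popularity $p_t$) has expected additive approximation $\mathbb{E}[\Delta(\mathbf{x})-d_{w}(\mathbf{x})]=\mathcal{O}(\ln^2 n)$, where $w$ is the winner returned by AVD.
   Context: A nomination profile on a finite agent set $N$ is a directed graph $\mathbf{x}$ on $N$ without self-loops. For $S\subseteq N$ and $j\in N$, $d_j(S,\mathbf{x})=|\{i\in S:(i,j)\text{ is an edge}\}|$; $d_j(\mathbf{x})=d_j(N\setminus\{j\},\mathbf{x})$ and $\Delta(\mathbf{x})=\max_j d_j(\mathbf{x})$. A priori popularity model: with $|N|=n+1$, each node $j$ has a popularity $p_j\in[0,1]$ and each directed edge $(i,j)$, $i\neq j$, is present independently with probability $p_j$; so $d_j(\mathbf{x})\sim\mathrm{Bin}(n,p_j)$, independent across $j$. AVD (approval voting with default) with default node $t\in N$: a non-default node $k$ beats a non-default node $j$ if $d_k(N\setminus\{j,k,t\},\mathbf{x})>d_j(N\setminus\{j,k,t\},\mathbf{x})$; a non-default node $k$ beats $t$ if $d_k(N\setminus\{k,t\},\mathbf{x})>d_t(N\setminus\{k,t\},\mathbf{x})$, and $t$ beats $k$ if $d_k(N\setminus\{k,t\},\mathbf{x})<d_t(N\setminus\{k,t\},\mathbf{x})$. AVD returns as winner $w$ the node that beats every other node if such a node exists, and $t$ otherwise. *)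

theory Defs
  imports Complex_Main
begin

text \<open>Agents are N = {0..n} (so n+1 agents). A nomination profile is a set of
directed edges E :: (nat \<times> nat) set on N without self-loops.\<close>

definition agents :: "nat \<Rightarrow> nat set" where
  "agents n = {..n}"

definition all_edges :: "nat \<Rightarrow> (nat \<times> nat) set" where
  "all_edges n = {(i, j). i \<le> n \<and> j \<le> n \<and> i \<noteq> j}"

definition indeg_in :: "nat \<Rightarrow> nat set \<Rightarrow> (nat \<times> nat) set \<Rightarrow> nat" where
  "indeg_in j S E = card {i \<in> S. (i, j) \<in> E}"

definition indeg :: "nat \<Rightarrow> nat \<Rightarrow> (nat \<times> nat) set \<Rightarrow> nat" where
  "indeg n j E = indeg_in j (agents n - {j}) E"

definition max_indeg :: "nat \<Rightarrow> (nat \<times> nat) set \<Rightarrow> nat" where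
  "max_indeg n E = Max ((\<lambda>j. indeg n j E) ` agents n)"

definition avd_beats :: "nat \<Rightarrow> nat \<Rightarrow> (nat \<times> nat) set \<Rightarrow> nat \<Rightarrow> nat \<Rightarrow> bool" where
  "avd_beats n t E a b =
     (if a \<noteq> t \<and> b \<noteq> t then
        indeg_in a (agents n - {a, b, t}) E > indeg_in b (agents n - {a, b, t}) E
      else if a \<noteq> t \<and> b = t then
        indeg_in a (agents n - {a, t}) E > indeg_in t (agents n - {a, t}) E
      else if a = t \<and> b \<noteq> t then
        indeg_in b (agents n - {b, t}) E < indeg_in t (agents n - {b, t}) E
      else False)"

definition avd_winner :: "nat \<Rightarrow> nat \<Rightarrow> (nat \<times> nat) set \<Rightarrow> nat" where
  "avd_winner n t E =
     (if \<exists>k \<in> agents n. \<forall>j \<in> agents n - {k}. avd_beats n t E k j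
      then (THE k. k \<in> agents n \<and> (\<forall>j \<in> agents n - {k}. avd_beats n t E k j))
      else t)"

text \<open>A priori popularity model: edge (i,j) present independently with probability p j.
Probability of the profile E (a subset of all_edges n).\<close>
definition profile_prob :: "nat \<Rightarrow> (nat \<Rightarrow> real) \<Rightarrow> (nat \<times> nat) set \<Rightarrow> real" where
  "profile_prob n p E = (\<Prod>e \<in> all_edges n. if e \<in> E then p (snd e) else 1 - p (snd e))"

definition avd_expected_gap :: "nat \<Rightarrow> (nat \<Rightarrow> real) \<Rightarrow> nat \<Rightarrow> real" where
  "avd_expected_gap n p t =
     (\<Sum>E \<in> Pow (all_edges n). profile_prob n p E *
        (real (max_indeg n E) - real (indeg n (avd_winner n t E) E)))"

end

theory Submission
  imports Defs "HOL-Library.FuncSet"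
begin

(* Let d be the vector of in-degrees. AVD decides every duel on the in-degrees with at
most two voters removed, so a node beating every other node has in-degree at least
\<Delta> - 2. Otherwise the default t wins, and the loss exceeds 2 only if \<Delta> > d\<^sub>t + 2
and a top non-default node k fails to beat some j \<noteq> t, which forces the near tie
d\<^sub>k \<le> d\<^sub>j + 2. The in-degrees are independent, d\<^sub>j ~ Bin(n, p\<^sub>j).
With s\<^sup>2 = 3 ln n, Chernoff bounds show that outside an event of probability O(1/n\<^sup>2)
every d\<^sub>j lies below n p\<^sub>j + O(s\<sigma> + s\<^sup>2) and d\<^sub>t above n p\<^sub>t - O(s\<sigma> + s\<^sup>2),
where \<sigma>\<^sup>2 = n p\<^sub>t (1 - p\<^sub>t); since p\<^sub>t is maximal, the shortfall \<Delta> - d\<^sub>t is then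
O(s\<sigma> + s\<^sup>2). When \<sigma> \<gg> s, the distribution of the runner-up d\<^sub>j is flat on a window
of m \<approx> \<sigma>/s values above d\<^sub>j; raising d\<^sub>j by 3, ..., m turns the near tie into a
strict lead of j without decreasing the shortfall, so near ties cost only a factor O(1/m)
of the expected shortfall, the strict leads of different j being disjoint. Altogether the
expected loss is O(s\<^sup>2) = O(ln n). *)

section \<open>Binomial tails and plateaus\<close>

lemma exp_le_quadratic:
  fixes x :: real assumes "x \<le> 1" shows "exp x \<le> 1 + x + x^2"
proof (cases "x \<ge> 0")
  case True then show ?thesis using exp_bound[of x] assms by (simp add: power2_eq_square)
next
  case False
  define y where "y = -x"
  have y: "y > 0" using False y_def by simp
  have "exp x = 1 / exp y" using y_def by (simp add: exp_minus field_simps)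
  also have "\<dots> \<le> 1 / (1 + y)" using y by (intro divide_left_mono) (auto simp: add_pos_pos)
  also have "\<dots> \<le> 1 - y + y^2"
  proof -
    have "1 \<le> (1 + y) * (1 - y + y^2)" using y by (simp add: algebra_simps power2_eq_square power3_eq_cube)
    then show ?thesis using y by (simp add: field_simps)
  qed
  finally show ?thesis using y_def by simp
qed

lemma bernoulli_centered_mgf_le:
  fixes q mu :: real
  assumes q: "0 \<le> q" "q \<le> 1" and mu: "\<bar>mu\<bar> \<le> 1"
  shows "(1 - q + q * exp mu) * exp (- mu * q) \<le> 1 + mu^2 * q * (1 - q)"
proof -
  have "- mu * q \<le> 1" "mu * (1 - q) \<le> 1"
    using q mu by (smt (verit, best) mult_le_one mult_minus_left abs_le_iff mult_left_le)+
  then have e1: "exp (- mu * q) \<le> 1 + (- mu * q) + (- mu * q)^2"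
    and e2: "exp (mu * (1 - q)) \<le> 1 + (mu * (1 - q)) + (mu * (1 - q))^2"
    by (simp_all only: exp_le_quadratic)
  have "(1 - q + q * exp mu) * exp (- mu * q) = (1 - q) * exp (- mu * q) + q * exp (mu * (1 - q))"
    by (simp add: algebra_simps exp_add[symmetric] exp_diff)
  also have "\<dots> \<le> (1 - q) * (1 + (- mu * q) + (- mu * q)^2) + q * (1 + (mu * (1 - q)) + (mu * (1 - q))^2)"
    using q e1 e2 by (intro add_mono mult_left_mono) auto
  also have "\<dots> = 1 + mu^2 * q * (1 - q)"
    by (simp add: algebra_simps power2_eq_square)
  finally show ?thesis .
qed

definition binomial_prob :: "nat \<Rightarrow> real \<Rightarrow> nat \<Rightarrow> real" where
  "binomial_prob n q x = real (n choose x) * q ^ x * (1 - q) ^ (n - x)"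

lemma binomial_prob_nonneg: "0 \<le> q \<Longrightarrow> q \<le> 1 \<Longrightarrow> 0 \<le> binomial_prob n q x"
  by (simp add: binomial_prob_def)

lemma binomial_prob_eq_0: "x > n \<Longrightarrow> binomial_prob n q x = 0"
  by (simp add: binomial_prob_def)

lemma binomial_prob_mgf:
  "(\<Sum>x\<le>n. binomial_prob n q x * exp (mu * real x)) = (1 - q + q * exp mu) ^ n"
proof -
  have "(1 - q + q * exp mu) ^ n = (q * exp mu + (1 - q)) ^ n" by (simp add: algebra_simps)
  also have "\<dots> = (\<Sum>k\<le>n. real (n choose k) * (q * exp mu) ^ k * (1 - q) ^ (n - k))"
    by (rule binomial_ring)
  also have "\<dots> = (\<Sum>x\<le>n. binomial_prob n q x * exp (mu * real x))"
    by (intro sum.cong) (auto simp: binomial_prob_def power_mult_distrib exp_of_nat_mult[symmetric] algebra_simps)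
  finally show ?thesis by simp
qed

lemma sum_binomial_prob: "(\<Sum>x\<le>n. binomial_prob n q x) = 1"
  using binomial_prob_mgf[of n q 0] by simp

lemma binomial_prob_centered_mgf_le:
  assumes q: "0 \<le> q" "q \<le> 1" and mu: "\<bar>mu\<bar> \<le> 1"
  shows "(\<Sum>x\<le>n. binomial_prob n q x * exp (mu * (real x - n * q))) \<le> exp (mu^2 * (n * q * (1 - q)))"
proof -
  have "(\<Sum>x\<le>n. binomial_prob n q x * exp (mu * (real x - n * q)))
      = (\<Sum>x\<le>n. binomial_prob n q x * exp (mu * real x)) * exp (- mu * q) ^ n"
  proof -
    have "\<And>x. exp (mu * (real x - n * q)) = exp (mu * real x) * exp (- mu * q) ^ n"
      by (simp add: exp_of_nat_mult[symmetric] exp_add[symmetric] algebra_simps)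
    then show ?thesis by (simp add: sum_distrib_right mult.assoc)
  qed
  also have "\<dots> = ((1 - q + q * exp mu) * exp (- mu * q)) ^ n"
    by (simp add: binomial_prob_mgf power_mult_distrib)
  also have "\<dots> \<le> (1 + mu^2 * q * (1 - q)) ^ n"
    using q by (intro power_mono bernoulli_centered_mgf_le mu) auto
  also have "\<dots> \<le> exp (mu^2 * q * (1 - q)) ^ n"
    using q by (intro power_mono) auto
  also have "\<dots> = exp (mu^2 * (n * q * (1 - q)))"
    by (simp add: exp_of_nat_mult[symmetric] algebra_simps)
  finally show ?thesis .
qed

lemma chernoff_exponent_le:
  fixes s sd a :: real
  assumes s: "s > 0" and sd: "sd \<ge> 0" and a: "a \<ge> 2*s*sd + 2*s^2"
  shows "(s / (sd+s) )^2 * sd^2 - (s / (sd+s)) * a \<le> -(s^2)"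
proof -
  define l where "l = s / (sd+s)"
  have l0: "l \<ge> 0" using s sd by (simp add: l_def)
  have h1: "l * sd \<le> s" using s sd by (simp add: l_def field_simps)
  have h2: "l * (2*s*sd + 2*s^2) = 2 * s^2" using s sd by (simp add: l_def field_simps power2_eq_square)
  have "l^2 * sd^2 = (l*sd)^2" by (simp add: power_mult_distrib)
  also have "\<dots> \<le> s^2" using h1 l0 sd by (intro power_mono) auto
  finally have "l^2 * sd^2 \<le> s^2" .
  moreover have "l * a \<ge> 2*s^2" using h2 a l0 by (metis mult_left_mono)
  ultimately show ?thesis unfolding l_def[symmetric] by linarith
qed

lemma binomial_tail_le:
  assumes q: "0 \<le> q" "q \<le> 1" and s: "s \<ge> 0" and sd: "sd \<ge> 0" "sd^2 = n * (q * (1 - q))"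
    and a: "a \<ge> 2*s*sd + 2*s^2" and sgn: "sc = 1 \<or> sc = (-1::real)"
  shows "(\<Sum>x\<le>n. binomial_prob n q x * of_bool (a \<le> sc * (real x - n * q))) \<le> exp (-(s^2))"
proof (cases "s = 0")
  case True
  have "(\<Sum>x\<le>n. binomial_prob n q x * of_bool (a \<le> sc * (real x - n * q))) \<le> (\<Sum>x\<le>n. binomial_prob n q x)"
    by (intro sum_mono) (auto simp: binomial_prob_nonneg q)
  then show ?thesis using True sum_binomial_prob[of n q] by simp
next
  case False
  then have s0: "s > 0" using s by simp
  define l where "l = s / (sd+s)"
  have l0: "0 \<le> l" "l \<le> 1" using s0 sd by (auto simp: l_def field_simps)
  define mu where "mu = sc * l"
  have mu: "\<bar>mu\<bar> \<le> 1" using sgn l0 by (auto simp: mu_def)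
  have "(\<Sum>x\<le>n. binomial_prob n q x * of_bool (a \<le> sc * (real x - n * q)))
      \<le> (\<Sum>x\<le>n. binomial_prob n q x * (exp (mu * (real x - n*q)) * exp (- l * a)))"
  proof (intro sum_mono mult_left_mono)
    fix x assume "x \<in> {..n}"
    have "mu * (real x - n*q) = l * (sc * (real x - n*q))" by (simp add: mu_def)
    then have "exp (mu * (real x - n*q)) * exp (- l * a) = exp (l * (sc * (real x - n*q) - a))"
      by (simp add: exp_add[symmetric] algebra_simps)
    moreover have "sc * (real x - n*q) \<ge> a \<Longrightarrow> 1 \<le> exp (l * (sc * (real x - n*q) - a))"
      using l0 by simp
    ultimately show "of_bool (a \<le> sc * (real x - n * q)) \<le> exp (mu * (real x - n*q)) * exp (- l * a)"
      by auto
  qed (auto simp: binomial_prob_nonneg q)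
  also have "\<dots> = (\<Sum>x\<le>n. binomial_prob n q x * exp (mu * (real x - n*q))) * exp (- l * a)"
    by (simp add: sum_distrib_right mult.assoc)
  also have "\<dots> \<le> exp (mu^2 * (n * q * (1 - q))) * exp (- l * a)"
    by (intro mult_right_mono binomial_prob_centered_mgf_le q mu) auto
  also have "\<dots> = exp (l^2 * sd^2 - l * a)"
  proof -
    have "mu^2 = l^2" using sgn by (auto simp: mu_def power_mult_distrib)
    then show ?thesis by (simp only: sd(2) mult.assoc exp_diff exp_minus divide_inverse mult_minus_left)
  qed
  also have "\<dots> \<le> exp (-(s^2))"
    using chernoff_exponent_le[OF s0 sd(1) a] by (simp add: l_def)
  finally show ?thesis .
qed

lemma binomial_prob_Suc_ratio:
  assumes y: "y < n"
  shows "binomial_prob n q (Suc y) * (real (Suc y) * (1-q)) = binomial_prob n q y * (real (n - y) * q)"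
proof -
  have c: "real (n choose Suc y) * real (Suc y) = real (n choose y) * real (n - y)"
  proof -
    have "Suc y * (n choose Suc y) = n * ((n - 1) choose y)" by (rule binomial_absorption)
    also have "\<dots> = (n - y) * (n choose y)" by (rule binomial_absorb_comp[symmetric])
    finally show ?thesis by (metis of_nat_mult mult.commute)
  qed
  have e: "n - y = Suc (n - Suc y)" using y by simp
  have "binomial_prob n q (Suc y) * (real (Suc y) * (1-q))
      = (real (n choose Suc y) * real (Suc y)) * q ^ y * q * (1-q) ^ (n - Suc y) * (1 - q)"
    by (simp add: binomial_prob_def mult_ac)
  also have "\<dots> = (real (n choose y) * real (n - y)) * q ^ y * q * (1-q) ^ (n - Suc y) * (1 - q)"
    by (simp only: c)
  also have "\<dots> = binomial_prob n q y * (real (n - y) * q)"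
    by (simp add: binomial_prob_def e mult_ac)
  finally show ?thesis .
qed

lemma binomial_prob_Suc_ge:
  fixes q eps :: real
  assumes q: "0 < q" "q < 1" and eps: "eps < 1"
    and ratio: "(1 - eps) * (real y + 1) * (1 - q) \<le> (real n - real y) * q"
  shows "(1 - eps) * binomial_prob n q y \<le> binomial_prob n q (Suc y)"
proof -
  have pos: "0 < (real y + 1) * (1 - q)" "0 < (1 - eps) * (real y + 1) * (1 - q)"
    using q eps by auto
  then have "0 < (real n - real y) * q" using ratio by linarith
  then have yn: "y < n" using q by (smt (verit) of_nat_less_iff mult_nonpos_nonneg)
  have "(1 - eps) * binomial_prob n q y * ((real y + 1) * (1 - q))
      \<le> binomial_prob n q y * ((real n - real y) * q)"
    using mult_left_mono[OF ratio binomial_prob_nonneg[of q n y]] q by (simp add: mult_ac)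
  also have "\<dots> = binomial_prob n q (Suc y) * ((real y + 1) * (1 - q))"
    using binomial_prob_Suc_ratio[OF yn, of q] yn by (simp add: of_nat_diff add.commute)
  finally show ?thesis using pos(1) by (simp add: mult_le_cancel_right)
qed

lemma binomial_prob_plateau_from_ratio:
  fixes q eps :: real and m :: nat
  assumes q: "0 < q" "q < 1" and eps: "0 < eps" "eps * m \<le> 1/2"
    and ratio: "\<And>y. x \<le> y \<Longrightarrow> y < x + m \<Longrightarrow>
                  (1 - eps) * (real y + 1) * (1 - q) \<le> (real n - real y) * q"
    and h: "h \<le> m"
  shows "binomial_prob n q x / 2 \<le> binomial_prob n q (x + h)"
proof -
  have small: "real k * eps \<le> 1/2" if "k \<le> m" for k
  proof -
    have "real k * eps \<le> real m * eps" using that eps by (intro mult_right_mono) auto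
    then show ?thesis using eps(2) by (simp add: mult.commute)
  qed
  have step: "(1 - eps) * binomial_prob n q y \<le> binomial_prob n q (Suc y)"
    if y: "x \<le> y" "y < x + m" for y
    using small[of 1] y by (intro binomial_prob_Suc_ge[OF q _ ratio[OF y]]) auto
  have "(1 - real k * eps) * binomial_prob n q x \<le> binomial_prob n q (x + k)" if "k \<le> m" for k
    using that
  proof (induction k)
    case (Suc k)
    have "(1 - real (Suc k) * eps) * binomial_prob n q x
        \<le> (1 - eps) * ((1 - real k * eps) * binomial_prob n q x)"
    proof -
      have "1 - real (Suc k) * eps \<le> (1 - eps) * (1 - real k * eps)"
        using eps by (simp add: algebra_simps)
      then show ?thesis
        using q by (simp add: mult.assoc[symmetric] mult_right_mono binomial_prob_nonneg)
    qed
    also have "\<dots> \<le> (1 - eps) * binomial_prob n q (x + k)"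
      using Suc small[of 1] by (intro mult_left_mono) auto
    also have "\<dots> \<le> binomial_prob n q (x + Suc k)"
      using step[of "x + k"] Suc.prems by simp
    finally show ?case .
  qed simp
  moreover have "binomial_prob n q x / 2 \<le> (1 - real h * eps) * binomial_prob n q x"
    using mult_right_mono[of "1/2" "1 - real h * eps" "binomial_prob n q x"] small[OF h] q
    by (simp add: binomial_prob_nonneg)
  ultimately show ?thesis using h by (meson order_trans)
qed

section \<open>Independent binomial in-degrees\<close>

lemma sum_PiE_prod_split:
  fixes w :: "'a \<Rightarrow> 'b \<Rightarrow> real"
  assumes I: "finite I" and j: "j \<in> I"
  shows "(\<Sum>d\<in>PiE I B. (\<Prod>i\<in>I. w i (d i)) * f d)
       = (\<Sum>d\<in>PiE (I-{j}) B. (\<Prod>i\<in>I-{j}. w i (d i)) * (\<Sum>x\<in>B j. w j x * f (d(j:=x))))"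
proof -
  have upd: "\<And>(a::'a\<Rightarrow>'b) i. (if i = j then a j else (a(j := undefined)) i) = a i" by auto
  have "(\<Sum>d\<in>PiE I B. (\<Prod>i\<in>I. w i (d i)) * f d)
      = (\<Sum>(x,g)\<in>B j \<times> PiE (I-{j}) B. (\<Prod>i\<in>I. w i ((g(j:=x)) i)) * f (g(j:=x)))"
    by (rule sum.reindex_bij_witness[of _ "\<lambda>(x,g). g(j := x)" "\<lambda>d. (d j, d(j := undefined))"])
       (use j in \<open>auto simp: PiE_def extensional_def Pi_def upd\<close>)
  also have "\<dots> = (\<Sum>(x,g)\<in>B j \<times> PiE (I-{j}) B. (w j x * (\<Prod>i\<in>I-{j}. w i (g i))) * f (g(j:=x)))"
  proof (intro sum.cong refl, clarify)
    fix x g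
    have "(\<Prod>i\<in>I. w i ((g(j:=x)) i)) = w j x * (\<Prod>i\<in>I-{j}. w i ((g(j:=x)) i))"
      using I j by (simp add: prod.remove)
    also have "(\<Prod>i\<in>I-{j}. w i ((g(j:=x)) i)) = (\<Prod>i\<in>I-{j}. w i (g i))"
      by (intro prod.cong) auto
    finally show "(\<Prod>i\<in>I. w i ((g(j:=x)) i)) * f (g(j:=x)) = (w j x * (\<Prod>i\<in>I-{j}. w i (g i))) * f (g(j:=x))" by simp
  qed
  also have "\<dots> = (\<Sum>x\<in>B j. \<Sum>g\<in>PiE (I-{j}) B. (w j x * (\<Prod>i\<in>I-{j}. w i (g i))) * f (g(j:=x)))"
    by (rule sum.cartesian_product[symmetric])
  also have "\<dots> = (\<Sum>g\<in>PiE (I-{j}) B. \<Sum>x\<in>B j. (w j x * (\<Prod>i\<in>I-{j}. w i (g i))) * f (g(j:=x)))"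
    by (rule sum.swap)
  also have "\<dots> = (\<Sum>d\<in>PiE (I-{j}) B. (\<Prod>i\<in>I-{j}. w i (d i)) * (\<Sum>x\<in>B j. w j x * f (d(j:=x))))"
    by (simp add: sum_distrib_left mult_ac)
  finally show ?thesis .
qed

definition deg_vectors :: "nat \<Rightarrow> (nat \<Rightarrow> nat) set" where
  "deg_vectors n = PiE {..n} (\<lambda>_. {..n})"

definition deg_prob :: "nat \<Rightarrow> (nat \<Rightarrow> real) \<Rightarrow> (nat \<Rightarrow> nat) \<Rightarrow> real" where
  "deg_prob n p d = (\<Prod>j\<le>n. binomial_prob n (p j) (d j))"

definition deg_expect :: "nat \<Rightarrow> (nat \<Rightarrow> real) \<Rightarrow> ((nat \<Rightarrow> nat) \<Rightarrow> real) \<Rightarrow> real" where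
  "deg_expect n p f = (\<Sum>d\<in>deg_vectors n. deg_prob n p d * f d)"

definition popularities :: "nat \<Rightarrow> (nat \<Rightarrow> real) \<Rightarrow> bool" where
  "popularities n p = (\<forall>j\<le>n. 0 \<le> p j \<and> p j \<le> 1)"

lemma finite_deg_vectors [simp]: "finite (deg_vectors n)"
  by (simp add: deg_vectors_def finite_PiE)

lemma deg_prob_nonneg: "popularities n p \<Longrightarrow> 0 \<le> deg_prob n p d"
  unfolding deg_prob_def popularities_def by (intro prod_nonneg) (auto intro: binomial_prob_nonneg)

lemma deg_expect_mono:
  assumes "popularities n p" "\<And>d. d \<in> deg_vectors n \<Longrightarrow> f d \<le> g d"
  shows "deg_expect n p f \<le> deg_expect n p g"
  unfolding deg_expect_def using assms by (intro sum_mono mult_left_mono) (auto intro: deg_prob_nonneg)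

lemma deg_expect_add: "deg_expect n p (\<lambda>d. f d + g d) = deg_expect n p f + deg_expect n p g"
  unfolding deg_expect_def by (simp add: algebra_simps sum.distrib)

lemma deg_expect_cmult: "deg_expect n p (\<lambda>d. c * f d) = c * deg_expect n p f"
  unfolding deg_expect_def by (simp add: sum_distrib_left mult_ac)

lemma sum_prod_binomial_prob_PiE:
  assumes "J \<subseteq> {..n}"
  shows "(\<Sum>d\<in>PiE J (\<lambda>_. {..n}). \<Prod>i\<in>J. binomial_prob n (p i) (d i)) = 1"
proof -
  have fJ: "finite J" using assms finite_subset by blast
  have "(\<Sum>d\<in>PiE J (\<lambda>_. {..n}). \<Prod>i\<in>J. binomial_prob n (p i) (d i)) = (\<Prod>i\<in>J. \<Sum>x\<le>n. binomial_prob n (p i) x)"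
    by (rule prod_sum_PiE[symmetric]) (use fJ in auto)
  also have "\<dots> = 1" by (simp add: sum_binomial_prob)
  finally show ?thesis .
qed

lemma deg_expect_const: "deg_expect n p (\<lambda>_. c) = c"
proof -
  have "deg_expect n p (\<lambda>_. c) = c * (\<Sum>d\<in>deg_vectors n. deg_prob n p d)"
    unfolding deg_expect_def by (simp add: sum_distrib_left mult_ac sum_distrib_right)
  also have "(\<Sum>d\<in>deg_vectors n. deg_prob n p d) = 1"
    unfolding deg_vectors_def deg_prob_def atMost_def[symmetric] by (rule sum_prod_binomial_prob_PiE) auto
  finally show ?thesis by simp
qed

lemma deg_expect_split:
  assumes j: "j \<le> n"
  shows "deg_expect n p f = (\<Sum>d\<in>PiE ({..n}-{j}) (\<lambda>_. {..n}). (\<Prod>i\<in>{..n}-{j}. binomial_prob n (p i) (d i)) *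
                       (\<Sum>x\<le>n. binomial_prob n (p j) x * f (d(j:=x))))"
  unfolding deg_expect_def deg_vectors_def deg_prob_def
  by (rule sum_PiE_prod_split[where w = "\<lambda>i x. binomial_prob n (p i) x" and B = "\<lambda>_. {..n}", simplified]) (use j in auto)

lemma deg_expect_marginal:
  assumes j: "j \<le> n"
  shows "deg_expect n p (\<lambda>d. g (d j)) = (\<Sum>x\<le>n. binomial_prob n (p j) x * g x)"
proof -
  have "deg_expect n p (\<lambda>d. g (d j)) = (\<Sum>d\<in>PiE ({..n}-{j}) (\<lambda>_. {..n}). (\<Prod>i\<in>{..n}-{j}. binomial_prob n (p i) (d i)) *
                       (\<Sum>x\<le>n. binomial_prob n (p j) x * g x))"
    using deg_expect_split[OF j, of p "\<lambda>d. g (d j)"] by simp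
  also have "\<dots> = (\<Sum>d\<in>PiE ({..n}-{j}) (\<lambda>_. {..n}). (\<Prod>i\<in>{..n}-{j}. binomial_prob n (p i) (d i))) *
                       (\<Sum>x\<le>n. binomial_prob n (p j) x * g x)"
    by (simp add: sum_distrib_right)
  also have "(\<Sum>d\<in>PiE ({..n}-{j}) (\<lambda>_. {..n}). (\<Prod>i\<in>{..n}-{j}. binomial_prob n (p i) (d i))) = 1"
    by (rule sum_prod_binomial_prob_PiE) auto
  finally show ?thesis by simp
qed

lemma deg_expect_sum: "finite J \<Longrightarrow> deg_expect n p (\<lambda>d. \<Sum>j\<in>J. f j d) = (\<Sum>j\<in>J. deg_expect n p (f j))"
  unfolding deg_expect_def by (simp add: sum_distrib_left sum.swap[of _ J])

section \<open>From nomination profiles to in-degree vectors\<close>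

definition in_edges :: "nat \<Rightarrow> nat \<Rightarrow> (nat \<times> nat) set" where
  "in_edges n j = (\<lambda>i. (i, j)) ` ({..n} - {j})"

definition in_edges_prob :: "nat \<Rightarrow> (nat \<Rightarrow> real) \<Rightarrow> nat \<Rightarrow> (nat \<times> nat) set \<Rightarrow> real" where
  "in_edges_prob n p j S = (\<Prod>e\<in>in_edges n j. if e \<in> S then p j else 1 - p j)"

lemma finite_in_edges[simp]: "finite (in_edges n j)"
  by (simp add: in_edges_def)

lemma card_in_edges: "j \<le> n \<Longrightarrow> card (in_edges n j) = n"
proof -
  assume j: "j \<le> n"
  have "card (in_edges n j) = card ({..n} - {j})"
    unfolding in_edges_def by (rule card_image) (auto simp: inj_on_def)
  also have "\<dots> = n" using j by simp
  finally show ?thesis .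
qed

lemma all_edges_eq_UN_in_edges: "all_edges n = (\<Union>j\<le>n. in_edges n j)"
  by (auto simp: all_edges_def in_edges_def)

lemma in_edges_disjoint: "j \<noteq> k \<Longrightarrow> in_edges n j \<inter> in_edges n k = {}"
  by (auto simp: in_edges_def)

lemma profile_prob_eq_prod_in_edges_prob:
  "profile_prob n p E = (\<Prod>j\<le>n. in_edges_prob n p j (E \<inter> in_edges n j))"
proof -
  have "profile_prob n p E = (\<Prod>j\<le>n. \<Prod>e\<in>in_edges n j. if e \<in> E then p (snd e) else 1 - p (snd e))"
    unfolding profile_prob_def all_edges_eq_UN_in_edges
    by (rule prod.UNION_disjoint) (auto simp: in_edges_def)
  also have "\<dots> = (\<Prod>j\<le>n. in_edges_prob n p j (E \<inter> in_edges n j))"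
    unfolding in_edges_prob_def by (intro prod.cong refl) (auto simp: in_edges_def)
  finally show ?thesis .
qed

lemma indeg_eq_card_in_edges: "indeg n j E = card (E \<inter> in_edges n j)"
proof -
  have "E \<inter> in_edges n j = (\<lambda>i. (i, j)) ` {i \<in> agents n - {j}. (i, j) \<in> E}"
    by (auto simp: in_edges_def agents_def)
  then have "card (E \<inter> in_edges n j) = card {i \<in> agents n - {j}. (i, j) \<in> E}"
    by (simp add: card_image inj_on_def)
  then show ?thesis by (simp add: indeg_def indeg_in_def)
qed

lemma in_edges_prob_eq:
  assumes "S \<subseteq> in_edges n j" "j \<le> n"
  shows "in_edges_prob n p j S = p j ^ card S * (1 - p j) ^ (n - card S)"
proof -
  have "in_edges_prob n p j S = (\<Prod>e\<in>in_edges n j \<inter> {e. e \<in> S}. p j) * (\<Prod>e\<in>in_edges n j \<inter> - {e. e \<in> S}. 1 - p j)"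
    unfolding in_edges_prob_def by (rule prod.If_cases) simp
  moreover have "in_edges n j \<inter> {e. e \<in> S} = S" using assms by auto
  moreover have "in_edges n j \<inter> - {e. e \<in> S} = in_edges n j - S" by auto
  moreover have "card (in_edges n j - S) = n - card S"
    using assms by (simp add: card_Diff_subset card_in_edges finite_subset)
  ultimately show ?thesis by simp
qed

lemma sum_in_edges_prob_card_eq:
  assumes j: "j \<le> n"
  shows "(\<Sum>S\<in>{S. S \<subseteq> in_edges n j \<and> card S = k}. in_edges_prob n p j S) = binomial_prob n (p j) k"
proof -
  have "(\<Sum>S\<in>{S. S \<subseteq> in_edges n j \<and> card S = k}. in_edges_prob n p j S)
      = (\<Sum>S\<in>{S. S \<subseteq> in_edges n j \<and> card S = k}. p j ^ k * (1 - p j) ^ (n - k))"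
    by (intro sum.cong refl) (auto simp: in_edges_prob_eq j)
  also have "\<dots> = real (card {S. S \<subseteq> in_edges n j \<and> card S = k}) * (p j ^ k * (1 - p j) ^ (n - k))"
    by simp
  also have "card {S. S \<subseteq> in_edges n j \<and> card S = k} = n choose k"
    using n_subsets[of "in_edges n j" k] by (simp add: card_in_edges j)
  finally show ?thesis by (simp add: binomial_prob_def mult_ac)
qed

lemma Union_in_edges_inter:
  assumes F: "F \<in> PiE {..n} (\<lambda>j. Pow (in_edges n j))" and k: "k \<le> n"
  shows "(\<Union>j\<le>n. F j) \<inter> in_edges n k = F k"
proof -
  have "F j \<inter> in_edges n k = (if j = k then F k else {})" if "j \<le> n" for j
    using F that in_edges_disjoint[of j k n] by auto
  then have "(\<Union>j\<le>n. F j \<inter> in_edges n k) = (\<Union>j\<le>n. if j = k then F k else {})"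
    by (intro SUP_cong) simp_all
  then show ?thesis using k by (auto split: if_splits)
qed

lemma sum_in_edges_split_eq_profile_sum:
  "(\<Sum>F\<in>PiE {..n} (\<lambda>j. Pow (in_edges n j)).
      (\<Prod>j\<le>n. in_edges_prob n p j (F j)) * h (\<lambda>j\<in>{..n}. card (F j)))
 = (\<Sum>E\<in>Pow (all_edges n). profile_prob n p E * h (\<lambda>j\<in>{..n}. indeg n j E))"
proof (rule sum.reindex_bij_witness[where i = "\<lambda>E. \<lambda>j\<in>{..n}. E \<inter> in_edges n j"
                                      and j = "\<lambda>F. \<Union>j\<le>n. F j"])
  fix F assume F: "F \<in> PiE {..n} (\<lambda>j. Pow (in_edges n j))"
  note split = Union_in_edges_inter[OF F]
  show "(\<lambda>j\<in>{..n}. (\<Union>j\<le>n. F j) \<inter> in_edges n j) = F"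
    using F split by (auto simp: PiE_def extensional_def fun_eq_iff)
  show "(\<Union>j\<le>n. F j) \<in> Pow (all_edges n)"
    using F by (auto simp: all_edges_eq_UN_in_edges)
  have "profile_prob n p (\<Union>j\<le>n. F j) = (\<Prod>j\<le>n. in_edges_prob n p j (F j))"
    unfolding profile_prob_eq_prod_in_edges_prob by (intro prod.cong) (auto simp: split)
  moreover have "(\<lambda>j\<in>{..n}. indeg n j (\<Union>j\<le>n. F j)) = (\<lambda>j\<in>{..n}. card (F j))"
    by (auto simp: indeg_eq_card_in_edges split)
  ultimately show "profile_prob n p (\<Union>j\<le>n. F j) * h (\<lambda>j\<in>{..n}. indeg n j (\<Union>j\<le>n. F j))
      = (\<Prod>j\<le>n. in_edges_prob n p j (F j)) * h (\<lambda>j\<in>{..n}. card (F j))"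
    by simp
next
  fix E assume "E \<in> Pow (all_edges n)"
  then show "(\<Union>j\<le>n. (\<lambda>j\<in>{..n}. E \<inter> in_edges n j) j) = E"
    by (auto simp: all_edges_eq_UN_in_edges)
qed auto

lemma sum_prod_in_edges_prob_card_eq:
  "(\<Sum>F\<in>PiE {..n} (\<lambda>j. {S. S \<subseteq> in_edges n j \<and> card S = d j}). \<Prod>j\<le>n. in_edges_prob n p j (F j))
 = deg_prob n p d"
proof -
  have "(\<Sum>F\<in>PiE {..n} (\<lambda>j. {S. S \<subseteq> in_edges n j \<and> card S = d j}). \<Prod>j\<le>n. in_edges_prob n p j (F j))
      = (\<Prod>j\<le>n. \<Sum>S\<in>{S. S \<subseteq> in_edges n j \<and> card S = d j}. in_edges_prob n p j S)"
    by (rule prod_sum_PiE[symmetric]) auto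
  also have "\<dots> = deg_prob n p d"
    unfolding deg_prob_def by (intro prod.cong refl) (simp add: sum_in_edges_prob_card_eq)
  finally show ?thesis .
qed

lemma profile_sum_eq_deg_expect:
  "(\<Sum>E\<in>Pow (all_edges n). profile_prob n p E * h (\<lambda>j\<in>{..n}. indeg n j E)) = deg_expect n p h"
proof -
  let ?P = "PiE {..n} (\<lambda>j. Pow (in_edges n j))"
  let ?w = "\<lambda>F. \<Prod>j\<le>n. in_edges_prob n p j (F j)"
  let ?c = "\<lambda>F. \<lambda>j\<in>{..n}. card (F j)"
  have "?c ` ?P \<subseteq> deg_vectors n"
  proof clarify
    fix F assume F: "F \<in> ?P"
    have "card (F j) \<le> n" if "j \<le> n" for j
      using card_mono[OF finite_in_edges, of "F j" n j] F that by (auto simp: card_in_edges)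
    then show "?c F \<in> deg_vectors n" by (auto simp: deg_vectors_def)
  qed
  then have "(\<Sum>F\<in>?P. ?w F * h (?c F)) = (\<Sum>d\<in>deg_vectors n. \<Sum>F\<in>{F \<in> ?P. ?c F = d}. ?w F * h (?c F))"
    by (intro sum.group[symmetric]) (auto intro: finite_PiE)
  also have "\<dots> = (\<Sum>d\<in>deg_vectors n. deg_prob n p d * h d)"
  proof (intro sum.cong refl)
    fix d assume d: "d \<in> deg_vectors n"
    have fibre: "{F \<in> ?P. ?c F = d} = PiE {..n} (\<lambda>j. {S. S \<subseteq> in_edges n j \<and> card S = d j})"
    proof (intro set_eqI iffI)
      fix F assume "F \<in> {F \<in> ?P. ?c F = d}"
      then show "F \<in> PiE {..n} (\<lambda>j. {S. S \<subseteq> in_edges n j \<and> card S = d j})"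
        by (auto simp: PiE_iff dest: fun_cong)
    next
      fix F assume "F \<in> PiE {..n} (\<lambda>j. {S. S \<subseteq> in_edges n j \<and> card S = d j})"
      then show "F \<in> {F \<in> ?P. ?c F = d}"
        using d by (auto simp: PiE_iff deg_vectors_def extensional_def)
    qed
    have "(\<Sum>F\<in>{F \<in> ?P. ?c F = d}. ?w F * h (?c F)) = (\<Sum>F\<in>{F \<in> ?P. ?c F = d}. ?w F) * h d"
      by (simp add: sum_distrib_right)
    also have "\<dots> = deg_prob n p d * h d"
      unfolding fibre sum_prod_in_edges_prob_card_eq ..
    finally show "(\<Sum>F\<in>{F \<in> ?P. ?c F = d}. ?w F * h (?c F)) = deg_prob n p d * h d" .
  qed
  finally show ?thesis
    unfolding sum_in_edges_split_eq_profile_sum[symmetric] deg_expect_def .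
qed

lemma profile_prob_nonneg:
  assumes "popularities n p" "E \<subseteq> all_edges n"
  shows "0 \<le> profile_prob n p E"
  using assms unfolding profile_prob_def popularities_def all_edges_def by (auto intro!: prod_nonneg)

section \<open>The loss of AVD\<close>

lemma atMost_Diff_singleton_ne_empty:
  assumes "1 \<le> (n::nat)" shows "{..n} - {t} \<noteq> {}"
proof -
  have "(if t = 0 then 1 else 0) \<in> {..n} - {t}" using assms by auto
  then show ?thesis by blast
qed

definition top_other :: "nat \<Rightarrow> nat \<Rightarrow> (nat \<Rightarrow> nat) \<Rightarrow> nat" where
  "top_other n t d = Max (d ` ({..n} - {t}))"

definition shortfall :: "nat \<Rightarrow> nat \<Rightarrow> (nat \<Rightarrow> nat) \<Rightarrow> real" where
  "shortfall n t d = real (max (top_other n t d) (d t)) - real (d t)"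

definition near_tie :: "nat \<Rightarrow> nat \<Rightarrow> (nat \<Rightarrow> nat) \<Rightarrow> bool" where
  "near_tie n t d = (\<exists>j k. j \<le> n \<and> k \<le> n \<and> j \<noteq> t \<and> k \<noteq> t \<and> j \<noteq> k \<and> d k = top_other n t d
                 \<and> top_other n t d \<le> d j + 2 \<and> d t + 3 \<le> top_other n t d)"

definition tie_shortfall :: "nat \<Rightarrow> nat \<Rightarrow> (nat \<Rightarrow> nat) \<Rightarrow> real" where
  "tie_shortfall n t d = (if near_tie n t d then shortfall n t d else 0)"

lemma le_top_other: "j \<le> n \<Longrightarrow> j \<noteq> t \<Longrightarrow> d j \<le> top_other n t d"
  unfolding top_other_def by (intro Max_ge) auto

lemma top_other_attained:
  assumes "1 \<le> n"
  obtains k where "k \<le> n" "k \<noteq> t" "d k = top_other n t d"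
proof -
  have "top_other n t d \<in> d ` ({..n} - {t})"
    unfolding top_other_def using atMost_Diff_singleton_ne_empty[OF assms] by (intro Max_in) auto
  then obtain k where "k \<in> {..n} - {t}" "top_other n t d = d k" by (rule imageE)
  then show ?thesis using that[of k] by simp
qed

lemma shortfall_nonneg: "0 \<le> shortfall n t d"
  by (simp add: shortfall_def)

lemma tie_shortfall_nonneg: "0 \<le> tie_shortfall n t d"
  by (simp add: tie_shortfall_def shortfall_nonneg)

lemma top_other_cong: "(\<And>i. i \<le> n \<Longrightarrow> d i = d' i) \<Longrightarrow> top_other n t d = top_other n t d'"
  unfolding top_other_def by (intro arg_cong[where f = Max] image_cong) auto

lemma tie_shortfall_cong:
  assumes "t \<le> n" "\<And>i. i \<le> n \<Longrightarrow> d i = d' i"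
  shows "tie_shortfall n t d = tie_shortfall n t d'"
proof -
  have top: "top_other n t d = top_other n t d'" and dt: "d t = d' t"
    using top_other_cong[of n d d' t] assms by auto
  have "near_tie n t d = near_tie n t d'"
    unfolding near_tie_def top dt using assms(2) by (auto; metis)
  then show ?thesis unfolding tie_shortfall_def shortfall_def top dt by simp
qed

lemma indeg_in_le_indeg: "S \<subseteq> agents n - {k} \<Longrightarrow> indeg_in k S E \<le> indeg n k E"
  unfolding indeg_def indeg_in_def by (intro card_mono) (auto simp: agents_def)

lemma indeg_le_indeg_in_plus_card:
  assumes "S \<subseteq> agents n - {k}"
  shows "indeg n k E \<le> indeg_in k S E + card ((agents n - {k}) - S)"
proof -
  have "{i \<in> agents n - {k}. (i, k) \<in> E} \<subseteq> {i \<in> S. (i, k) \<in> E} \<union> ((agents n - {k}) - S)"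
    using assms by auto
  then have "card {i \<in> agents n - {k}. (i, k) \<in> E} \<le> card ({i \<in> S. (i, k) \<in> E} \<union> ((agents n - {k}) - S))"
    by (intro card_mono) (use assms in \<open>auto simp: agents_def intro: finite_subset\<close>)
  also have "\<dots> \<le> card {i \<in> S. (i, k) \<in> E} + card ((agents n - {k}) - S)"
    by (rule card_Un_le)
  finally show ?thesis unfolding indeg_def indeg_in_def .
qed

lemma indeg_le_indeg_in_plus_2: "indeg n k E \<le> indeg_in k (agents n - {a, b, k}) E + 2"
proof -
  have "card ((agents n - {k}) - (agents n - {a, b, k})) \<le> card {a, b}"
    by (intro card_mono) auto
  also have "\<dots> \<le> 2"
    by (simp add: card_insert_if)
  moreover have "indeg n k E \<le> indeg_in k (agents n - {a, b, k}) E
      + card ((agents n - {k}) - (agents n - {a, b, k}))"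
    by (rule indeg_le_indeg_in_plus_card) auto
  ultimately show ?thesis by linarith
qed

lemma indeg_le_indeg_in_plus_1: "indeg n k E \<le> indeg_in k (agents n - {k, a}) E + 1"
proof -
  have "card ((agents n - {k}) - (agents n - {k, a})) \<le> card {a}"
    by (intro card_mono) auto
  moreover have "indeg n k E \<le> indeg_in k (agents n - {k, a}) E
      + card ((agents n - {k}) - (agents n - {k, a}))"
    by (rule indeg_le_indeg_in_plus_card) auto
  ultimately show ?thesis by simp
qed

lemma avd_beats_asym: "avd_beats n t E a b \<Longrightarrow> \<not> avd_beats n t E b a"
  unfolding avd_beats_def by (auto simp: insert_commute split: if_splits)

lemma indeg_le_of_avd_beats:
  assumes beats: "avd_beats n t E k j"
  shows "indeg n j E \<le> indeg n k E + 2"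
proof (cases "k = t")
  case True
  then have "j \<noteq> t" using beats by (auto simp: avd_beats_def)
  then have "indeg_in j (agents n - {j, t}) E < indeg_in t (agents n - {j, t}) E"
    using beats True by (simp add: avd_beats_def)
  moreover have "indeg n j E \<le> indeg_in j (agents n - {j, t}) E + 1"
    by (rule indeg_le_indeg_in_plus_1)
  moreover have "indeg_in t (agents n - {j, t}) E \<le> indeg n t E"
    by (rule indeg_in_le_indeg) auto
  ultimately show ?thesis using True by simp
next
  case kt: False
  show ?thesis
  proof (cases "j = t")
    case True
    have "indeg_in t (agents n - {t, k}) E < indeg_in k (agents n - {t, k}) E"
      using beats kt True by (simp add: avd_beats_def insert_commute)
    moreover have "indeg n t E \<le> indeg_in t (agents n - {t, k}) E + 1"
      by (rule indeg_le_indeg_in_plus_1)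
    moreover have "indeg_in k (agents n - {t, k}) E \<le> indeg n k E"
      by (rule indeg_in_le_indeg) auto
    ultimately show ?thesis using True by simp
  next
    case False
    have "indeg_in j (agents n - {k, t, j}) E < indeg_in k (agents n - {k, t, j}) E"
      using beats kt False by (simp add: avd_beats_def insert_commute)
    moreover have "indeg n j E \<le> indeg_in j (agents n - {k, t, j}) E + 2"
      by (rule indeg_le_indeg_in_plus_2)
    moreover have "indeg_in k (agents n - {k, t, j}) E \<le> indeg n k E"
      by (rule indeg_in_le_indeg) auto
    ultimately show ?thesis by simp
  qed
qed

lemma indeg_le_of_not_avd_beats:
  assumes kt: "k \<noteq> t" and not_beats: "\<not> avd_beats n t E k j"
  shows "indeg n k E \<le> indeg n j E + 2"
proof (cases "j = t")
  case True
  have "indeg_in k (agents n - {k, t}) E \<le> indeg_in t (agents n - {k, t}) E"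
    using not_beats kt True by (simp add: avd_beats_def)
  moreover have "indeg n k E \<le> indeg_in k (agents n - {k, t}) E + 1"
    by (rule indeg_le_indeg_in_plus_1)
  moreover have "indeg_in t (agents n - {k, t}) E \<le> indeg n t E"
    by (rule indeg_in_le_indeg) auto
  ultimately show ?thesis using True by simp
next
  case False
  have "indeg_in k (agents n - {j, t, k}) E \<le> indeg_in j (agents n - {j, t, k}) E"
    using not_beats kt False by (simp add: avd_beats_def insert_commute)
  moreover have "indeg n k E \<le> indeg_in k (agents n - {j, t, k}) E + 2"
    by (rule indeg_le_indeg_in_plus_2)
  moreover have "indeg_in j (agents n - {j, t, k}) E \<le> indeg n j E"
    by (rule indeg_in_le_indeg) auto
  ultimately show ?thesis by simp
qed

lemma avd_winner_beats_all:
  assumes "\<exists>k\<in>agents n. \<forall>j\<in>agents n - {k}. avd_beats n t E k j"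
  shows "avd_winner n t E \<in> agents n"
    and "\<forall>j\<in>agents n - {avd_winner n t E}. avd_beats n t E (avd_winner n t E) j"
proof -
  have "\<exists>!k. k \<in> agents n \<and> (\<forall>j\<in>agents n - {k}. avd_beats n t E k j)"
    using assms avd_beats_asym by blast
  from theI'[OF this] assms show "avd_winner n t E \<in> agents n"
    and "\<forall>j\<in>agents n - {avd_winner n t E}. avd_beats n t E (avd_winner n t E) j"
    unfolding avd_winner_def by simp_all
qed

lemma max_indeg_attained: "\<exists>m\<in>agents n. indeg n m E = max_indeg n E"
proof -
  have "max_indeg n E \<in> (\<lambda>j. indeg n j E) ` agents n"
    unfolding max_indeg_def agents_def by (intro Max_in) auto
  then show ?thesis by auto
qed

lemma max_indeg_eq_max_top_other:
  assumes "t \<le> n" "1 \<le> n"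
  shows "max_indeg n E = max (top_other n t (\<lambda>j. indeg n j E)) (indeg n t E)"
proof -
  have agents: "agents n = insert t ({..n} - {t})" using assms by (auto simp: agents_def)
  have "max_indeg n E = Max (insert (indeg n t E) ((\<lambda>j. indeg n j E) ` ({..n} - {t})))"
    unfolding max_indeg_def agents by (simp only: image_insert)
  also have "\<dots> = max (indeg n t E) (top_other n t (\<lambda>j. indeg n j E))"
    unfolding top_other_def using atMost_Diff_singleton_ne_empty[OF assms(2)] by (intro Max_insert) auto
  finally show ?thesis by (simp add: max.commute)
qed

lemma max_indeg_le_avd_winner_plus_2:
  assumes "\<exists>k\<in>agents n. \<forall>j\<in>agents n - {k}. avd_beats n t E k j"
  shows "max_indeg n E \<le> indeg n (avd_winner n t E) E + 2"
proof -
  obtain m where m: "m \<in> agents n" "indeg n m E = max_indeg n E"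
    using max_indeg_attained by blast
  show ?thesis
  proof (cases "m = avd_winner n t E")
    case False
    then show ?thesis using m avd_winner_beats_all[OF assms] indeg_le_of_avd_beats by fastforce
  qed (use m in simp)
qed

lemma avd_gap_le:
  assumes t: "t \<le> n" and n: "1 \<le> n"
  shows "real (max_indeg n E) - real (indeg n (avd_winner n t E) E) \<le> 2 + tie_shortfall n t (\<lambda>j. indeg n j E)"
proof (cases "\<exists>k\<in>agents n. \<forall>j\<in>agents n - {k}. avd_beats n t E k j")
  case True
  then have "real (max_indeg n E) \<le> real (indeg n (avd_winner n t E) E) + 2"
    using max_indeg_le_avd_winner_plus_2 by fastforce
  then show ?thesis using tie_shortfall_nonneg[of n t "\<lambda>j. indeg n j E"] by linarith
next
  case no_winner: False
  define d where "d = (\<lambda>j. indeg n j E)"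
  have w: "avd_winner n t E = t" using no_winner unfolding avd_winner_def by (simp only: if_False)
  have max: "max_indeg n E = max (top_other n t d) (d t)"
    unfolding d_def by (rule max_indeg_eq_max_top_other[OF t n])
  show ?thesis
  proof (cases "top_other n t d \<le> d t + 2")
    case True
    then show ?thesis using w max tie_shortfall_nonneg[of n t d] by (simp add: d_def)
  next
    case big: False
    obtain k where k: "k \<le> n" "k \<noteq> t" "d k = top_other n t d"
      using top_other_attained[OF n] by metis
    then obtain j where j: "j \<in> agents n - {k}" "\<not> avd_beats n t E k j"
      using no_winner by (auto simp: agents_def)
    have "d k \<le> d j + 2" unfolding d_def by (rule indeg_le_of_not_avd_beats[OF k(2) j(2)])
    then have "near_tie n t d"
      unfolding near_tie_def using j k big by (intro exI[of _ j] exI[of _ k]) (auto simp: agents_def)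
    then show ?thesis using w max by (simp add: d_def tie_shortfall_def shortfall_def)
  qed
qed

lemma avd_expected_gap_le:
  assumes p: "popularities n p" and t: "t \<le> n" and n: "1 \<le> n"
  shows "avd_expected_gap n p t \<le> 2 + deg_expect n p (tie_shortfall n t)"
proof -
  have "avd_expected_gap n p t
      \<le> (\<Sum>E\<in>Pow (all_edges n). profile_prob n p E * (2 + tie_shortfall n t (\<lambda>j\<in>{..n}. indeg n j E)))"
    unfolding avd_expected_gap_def
  proof (intro sum_mono mult_left_mono)
    fix E assume E: "E \<in> Pow (all_edges n)"
    have "tie_shortfall n t (\<lambda>j\<in>{..n}. indeg n j E) = tie_shortfall n t (\<lambda>j. indeg n j E)"
      by (rule tie_shortfall_cong[OF t]) simp
    then show "real (max_indeg n E) - real (indeg n (avd_winner n t E) E)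
        \<le> 2 + tie_shortfall n t (\<lambda>j\<in>{..n}. indeg n j E)"
      using avd_gap_le[OF t n] by simp
    show "0 \<le> profile_prob n p E" using profile_prob_nonneg[OF p] E by auto
  qed
  also have "\<dots> = deg_expect n p (\<lambda>_. 2) + deg_expect n p (tie_shortfall n t)"
    unfolding profile_sum_eq_deg_expect[symmetric] by (simp add: algebra_simps sum.distrib)
  also have "\<dots> = 2 + deg_expect n p (tie_shortfall n t)"
    by (simp add: deg_expect_const)
  finally show ?thesis .
qed
section \<open>Concentration of the in-degrees\<close>

definition binomial_sd :: "nat \<Rightarrow> real \<Rightarrow> real" where
  "binomial_sd n q = sqrt (real n * (q * (1 - q)))"

definition deviation :: "nat \<Rightarrow> real \<Rightarrow> real \<Rightarrow> real" where
  "deviation n s q = 2 * s * binomial_sd n q + 2 * s^2"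

definition typical :: "nat \<Rightarrow> (nat \<Rightarrow> real) \<Rightarrow> nat \<Rightarrow> real \<Rightarrow> (nat \<Rightarrow> nat) \<Rightarrow> bool" where
  "typical n p t s d \<longleftrightarrow> (\<forall>j\<le>n. real (d j) < real n * p j + deviation n s (p j))
                        \<and> real n * p t - deviation n s (p t) < real (d t)"

lemma binomial_sd_sq: "0 \<le> q \<Longrightarrow> q \<le> 1 \<Longrightarrow> (binomial_sd n q)^2 = real n * (q * (1 - q))"
  unfolding binomial_sd_def by simp

lemma binomial_sd_nonneg: "0 \<le> q \<Longrightarrow> q \<le> 1 \<Longrightarrow> 0 \<le> binomial_sd n q"
  unfolding binomial_sd_def by simp

lemma deg_expect_upper_tail_le:
  assumes j: "j \<le> n" and p: "popularities n p" and s: "s \<ge> 0"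
  shows "deg_expect n p (\<lambda>d. of_bool (real n * p j + deviation n s (p j) \<le> real (d j))) \<le> exp (-(s^2))"
proof -
  have q: "0 \<le> p j" "p j \<le> 1" using p j by (auto simp: popularities_def)
  have "deg_expect n p (\<lambda>d. of_bool (real n * p j + deviation n s (p j) \<le> real (d j)))
      = (\<Sum>x\<le>n. binomial_prob n (p j) x * of_bool (real n * p j + deviation n s (p j) \<le> real x))"
    by (rule deg_expect_marginal[OF j])
  also have "\<dots> = (\<Sum>x\<le>n. binomial_prob n (p j) x * of_bool (deviation n s (p j) \<le> 1 * (real x - n * p j)))"
    by (intro sum.cong refl) (auto simp: algebra_simps)
  also have "\<dots> \<le> exp (-(s^2))"
    by (rule binomial_tail_le[OF q s binomial_sd_nonneg[OF q] binomial_sd_sq[OF q]])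
      (auto simp: deviation_def)
  finally show ?thesis .
qed

lemma deg_expect_lower_tail_le:
  assumes j: "j \<le> n" and p: "popularities n p" and s: "s \<ge> 0"
  shows "deg_expect n p (\<lambda>d. of_bool (real (d j) \<le> real n * p j - deviation n s (p j))) \<le> exp (-(s^2))"
proof -
  have q: "0 \<le> p j" "p j \<le> 1" using p j by (auto simp: popularities_def)
  have "deg_expect n p (\<lambda>d. of_bool (real (d j) \<le> real n * p j - deviation n s (p j)))
      = (\<Sum>x\<le>n. binomial_prob n (p j) x * of_bool (real x \<le> real n * p j - deviation n s (p j)))"
    by (rule deg_expect_marginal[OF j])
  also have "\<dots> = (\<Sum>x\<le>n. binomial_prob n (p j) x * of_bool (deviation n s (p j) \<le> (-1) * (real x - n * p j)))"
    by (intro sum.cong refl) (auto simp: algebra_simps)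
  also have "\<dots> \<le> exp (-(s^2))"
    by (rule binomial_tail_le[OF q s binomial_sd_nonneg[OF q] binomial_sd_sq[OF q]])
      (auto simp: deviation_def)
  finally show ?thesis .
qed

lemma deg_expect_not_typical_le:
  assumes p: "popularities n p" and t: "t \<le> n" and s: "s \<ge> 0"
  shows "deg_expect n p (\<lambda>d. of_bool (\<not> typical n p t s d)) \<le> (real n + 2) * exp (-(s^2))"
proof -
  let ?up = "\<lambda>j d. of_bool (real n * p j + deviation n s (p j) \<le> real (d j)) :: real"
  let ?low = "\<lambda>d. of_bool (real (d t) \<le> real n * p t - deviation n s (p t)) :: real"
  have union_bound: "of_bool (\<not> typical n p t s d) \<le> (\<Sum>j\<le>n. ?up j d) + ?low d" for d
  proof (cases "typical n p t s d \<or> real (d t) \<le> real n * p t - deviation n s (p t)")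
    case True
    then show ?thesis by (auto intro: sum_nonneg)
  next
    case False
    then obtain j where j: "j \<le> n" "real n * p j + deviation n s (p j) \<le> real (d j)"
      unfolding typical_def by (auto simp: not_less)
    then have "1 \<le> (\<Sum>j\<le>n. ?up j d)"
      using member_le_sum[of j "{..n}" "\<lambda>j. ?up j d"] by auto
    then show ?thesis using False by simp
  qed
  have "deg_expect n p (\<lambda>d. of_bool (\<not> typical n p t s d))
      \<le> (\<Sum>j\<le>n. deg_expect n p (?up j)) + deg_expect n p ?low"
    using deg_expect_mono[OF p union_bound] by (simp only: deg_expect_add deg_expect_sum[OF finite_atMost])
  also have "\<dots> \<le> (\<Sum>j\<le>n. exp (-(s^2))) + exp (-(s^2))"
    by (intro add_mono sum_mono deg_expect_upper_tail_le deg_expect_lower_tail_le p s t) auto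
  also have "\<dots> = (real n + 2) * exp (-(s^2))"
    by (simp add: algebra_simps)
  finally show ?thesis .
qed

lemma shortfall_le_n:
  assumes "d \<in> deg_vectors n" "t \<le> n" "1 \<le> n"
  shows "shortfall n t d \<le> real n"
proof -
  obtain k where "k \<le> n" "d k = top_other n t d"
    using top_other_attained[OF assms(3)] by metis
  then have "top_other n t d \<le> n" "d t \<le> n"
    using assms by (auto simp: deg_vectors_def PiE_iff) (metis atMost_iff)
  then show ?thesis by (auto simp: shortfall_def max_def)
qed

lemma bernoulli_var_le_twice_plus_diff:
  fixes p pj :: real assumes "0 \<le> pj" "pj \<le> p" "p \<le> 1"
  shows "pj * (1 - pj) \<le> 2 * (p * (1 - p)) + (p - pj)"
proof (cases "p \<le> 1/2")
  case True
  have "pj * (1 - pj) \<le> pj" using assms by (simp add: mult_left_le)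
  also have "\<dots> \<le> p" using assms by simp
  also have "p \<le> 2 * (p * (1 - p))"
  proof -
    have "p * (2 * p) \<le> p * 1" using True assms by (intro mult_left_mono) auto
    then show ?thesis by (simp add: algebra_simps)
  qed
  finally show ?thesis using assms by simp
next
  case False
  have "pj * (1 - pj) \<le> 1 * (1 - pj)" using assms by (intro mult_right_mono) auto
  then have "pj * (1 - pj) \<le> 1 - pj" by simp
  also have "\<dots> = (1 - p) + (p - pj)" by simp
  also have "1 - p \<le> 2 * (p * (1 - p))"
  proof -
    have "(1 - p) * 1 \<le> (1 - p) * (2 * p)" using False assms by (intro mult_left_mono) auto
    then show ?thesis by (simp add: algebra_simps)
  qed
  finally show ?thesis by simp
qed

lemma bernoulli_var_le_plus_diff:
  fixes p pj :: real assumes "0 \<le> pj" "pj \<le> p" "p \<le> 1"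
  shows "p * (1 - p) \<le> pj * (1 - pj) + (p - pj)"
proof -
  have "p * (1 - p) - pj * (1 - pj) = (p - pj) * (1 - p - pj)" by (simp add: algebra_simps)
  also have "\<dots> \<le> (p - pj) * 1" using assms by (intro mult_left_mono) auto
  finally show ?thesis by simp
qed

lemma deviation_gap_le:
  fixes N p q s sd sdq :: real
  assumes N: "N \<ge> 0" and pp: "0 \<le> q" "q \<le> p" "p \<le> 1" and s: "s \<ge> 0"
    and sd: "sd \<ge> 0" "sd^2 = N * (p * (1 - p))" and sdq: "sdq \<ge> 0" "sdq^2 = N * (q * (1 - q))"
  shows "N * q + (2*s*sdq + 2*s^2) - (N * p - (2*s*sd + 2*s^2)) \<le> 5*s*sd + 5*s^2"
proof -
  define u where "u = N * (p - q)"
  have u0: "u \<ge> 0" using N pp by (simp add: u_def)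
  have b: "sdq^2 \<le> 2 * sd^2 + u"
  proof -
    have "N * (q * (1 - q)) \<le> N * (2 * (p * (1 - p)) + (p - q))"
      using bernoulli_var_le_twice_plus_diff[OF pp] N by (intro mult_left_mono) auto
    then show ?thesis using sd sdq by (simp add: u_def algebra_simps)
  qed
  have sq: "(2*s*sdq)^2 \<le> (3*s*sd + s^2 + u)^2"
  proof -
    have "(2*s*sdq)^2 = 4 * s^2 * sdq^2" by (simp add: power_mult_distrib)
    also have "\<dots> \<le> 4 * s^2 * (2 * sd^2 + u)" using b s by (intro mult_left_mono) auto
    also have "\<dots> \<le> 9 * s^2 * sd^2 + (s^2 + u)^2"
    proof -
      have "4 * s^2 * u \<le> (s^2 + u)^2" using sum_squares_ge_zero[of "s^2 - u" 0]
        by (simp add: power2_eq_square algebra_simps)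
      moreover have "0 \<le> s^2 * sd^2" by simp
      moreover have "4 * s^2 * (2 * sd^2 + u) = 8 * (s^2 * sd^2) + 4 * s^2 * u" by (simp add: algebra_simps)
      moreover have "9 * s^2 * sd^2 = 9 * (s^2 * sd^2)" by simp
      ultimately show ?thesis by linarith
    qed
    also have "\<dots> \<le> (3*s*sd + s^2 + u)^2"
    proof -
      have "0 \<le> 3*s*sd * (s^2 + u)" using s sd u0 by simp
      then show ?thesis by (simp add: power2_eq_square algebra_simps)
    qed
    finally show ?thesis .
  qed
  have "2*s*sdq \<le> 3*s*sd + s^2 + u"
    using power2_le_imp_le[OF sq] s sd u0 by simp
  then show ?thesis by (simp add: u_def algebra_simps)
qed

lemma shortfall_le_if_typical:
  assumes p: "popularities n p" and t: "t \<le> n" and n: "1 \<le> n"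
    and p_max: "\<forall>j\<le>n. p j \<le> p t" and s: "s \<ge> 0" and d_typical: "typical n p t s d"
  shows "shortfall n t d \<le> 5 * s * binomial_sd n (p t) + 5 * s^2"
proof (cases "top_other n t d \<le> d t")
  case True
  have "0 \<le> p t" "p t \<le> 1" using p t by (auto simp: popularities_def)
  then show ?thesis unfolding shortfall_def using True s binomial_sd_nonneg[of "p t" n] by simp
next
  case False
  obtain k where k: "k \<le> n" "k \<noteq> t" "d k = top_other n t d"
    using top_other_attained[OF n] by metis
  have qk: "0 \<le> p k" "p k \<le> p t" "p t \<le> 1" and qt: "0 \<le> p t"
    using p p_max k t by (auto simp: popularities_def)
  have "shortfall n t d = real (d k) - real (d t)"
    unfolding shortfall_def using False k by simp
  also have "\<dots> \<le> real n * p k + deviation n s (p k) - (real n * p t - deviation n s (p t))"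
    using d_typical k unfolding typical_def by (smt (verit))
  also have "\<dots> \<le> 5 * s * binomial_sd n (p t) + 5 * s^2"
    unfolding deviation_def
    by (rule deviation_gap_le[OF _ qk s binomial_sd_nonneg[OF qt qk(3)] binomial_sd_sq[OF qt qk(3)]
          binomial_sd_nonneg binomial_sd_sq]) (use qk in auto)
  finally show ?thesis .
qed

lemma deg_expect_shortfall_le:
  assumes p: "popularities n p" and t: "t \<le> n" and n: "1 \<le> n" and p_max: "\<forall>j\<le>n. p j \<le> p t"
    and s: "s \<ge> 0" and rare: "real n * ((real n + 2) * exp (-(s^2))) \<le> 1"
  shows "deg_expect n p (shortfall n t) \<le> 5 * s * binomial_sd n (p t) + 5 * s^2 + 1"
proof -
  define A where "A = 5 * s * binomial_sd n (p t) + 5 * s^2"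
  have "0 \<le> A"
    using s binomial_sd_nonneg[of "p t" n] p t by (auto simp: A_def popularities_def)
  then have "deg_expect n p (shortfall n t) \<le> deg_expect n p (\<lambda>d. A + real n * of_bool (\<not> typical n p t s d))"
    using shortfall_le_if_typical[OF p t n p_max s] shortfall_le_n[OF _ t n]
    by (intro deg_expect_mono[OF p]) (auto simp: A_def intro: add_increasing)
  also have "\<dots> = A + real n * deg_expect n p (\<lambda>d. of_bool (\<not> typical n p t s d))"
    by (simp add: deg_expect_add deg_expect_const deg_expect_cmult)
  also have "real n * deg_expect n p (\<lambda>d. of_bool (\<not> typical n p t s d)) \<le> real n * ((real n + 2) * exp (-(s^2)))"
    by (intro mult_left_mono deg_expect_not_typical_le p t s) simp
  finally show ?thesis using rare by (simp add: A_def)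
qed

section \<open>Near ties at the top\<close>

lemma runner_up_sd_le_twice:
  fixes N p q s sd sdq :: real
  assumes N: "N \<ge> 0" and pq: "0 \<le> q" "q \<le> p" "p \<le> 1" and s: "s \<ge> 1"
    and sd: "sd \<ge> 0" "sd^2 = N * (p * (1 - p))" and sdq: "sdq \<ge> 0" "sdq^2 = N * (q * (1 - q))"
    and big: "sd \<ge> 240 * s"
    and close: "N * (p - q) < (2*s*sdq + 2*s^2) + (2*s*sd + 2*s^2)"
  shows "sdq \<le> 2 * sd"
proof (rule ccontr)
  assume "\<not> sdq \<le> 2 * sd"
  then have gt: "2 * sd < sdq" by simp
  have "N * (q * (1 - q)) \<le> N * (2 * (p * (1 - p)) + (p - q))"
    using bernoulli_var_le_twice_plus_diff[OF pq] N by (intro mult_left_mono) auto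
  then have "sdq * sdq \<le> 2 * (sd * sd) + N * (p - q)"
    using sd sdq by (simp add: power2_eq_square algebra_simps)
  moreover have "(240*s) * sdq \<le> sd * sdq" using big sdq by (intro mult_right_mono) auto
  moreover have "(240*s) * sd \<le> sd * sd" using big sd by (intro mult_right_mono) auto
  moreover have "(240*s) * (240*s) \<le> sd * sd" using big s by (intro mult_mono) auto
  moreover have "(2*sd) * sdq \<le> sdq * sdq" using gt sdq by (intro mult_right_mono) auto
  moreover have "(2*sd) * (2*sd) \<le> sdq * sdq" using gt sd by (intro mult_mono) auto
  moreover have "0 < sdq * sdq" using gt sd by simp
  ultimately show False
    using close by (simp add: power2_eq_square algebra_simps)
qed

lemma runner_up_window_bounds:
  fixes N p q s sd sdq x :: real
  assumes N: "N \<ge> 0" and pq: "0 \<le> q" "q \<le> p" "p \<le> 1" and s: "s \<ge> 1"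
    and sd: "sd \<ge> 0" "sd^2 = N * (p * (1 - p))" and sdq: "sdq \<ge> 0" "sdq^2 = N * (q * (1 - q))"
    and big: "sd \<ge> 240 * s"
    and x_upper: "x < N * q + (2*s*sdq + 2*s^2)" and x_lower: "N * p - (2*s*sd + 2*s^2) \<le> x"
  shows "2*s*sdq + 2*s^2 \<le> 5*s*sd" and "(19/20) * sd^2 \<le> x * (1 - q)" and "0 < sdq^2"
proof -
  define u where "u = N * (p - q)"
  define dv where "dv = 2*s*sd + 2*s^2"
  define dvq where "dvq = 2*s*sdq + 2*s^2"
  have u0: "0 \<le> u" using N pq by (simp add: u_def)
  have ss: "s * s \<le> s * sd / 240" and ssd: "0 \<le> s * sd"
    using big s by (simp_all add: field_simps)
  have u: "u < dvq + dv" using x_upper x_lower by (simp add: u_def dv_def dvq_def algebra_simps)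
  have "sdq \<le> 2 * sd"
    using runner_up_sd_le_twice[OF N pq s sd sdq big] u by (simp add: u_def dv_def dvq_def)
  then have "2*s*sdq \<le> 4 * (s*sd)" using s by (simp add: mult_left_mono)
  then show dvq: "2*s*sdq + 2*s^2 \<le> 5*s*sd"
    using ss ssd by (simp add: power2_eq_square)
  have dv: "dv \<le> 3 * (s * sd)"
    using ss ssd by (simp add: dv_def power2_eq_square)
  have "N * (p * (1 - p)) \<le> N * (q * (1 - q) + (p - q))"
    using bernoulli_var_le_plus_diff[OF pq] N by (intro mult_left_mono) auto
  then have var: "sd^2 \<le> sdq^2 + u" using sd sdq by (simp add: u_def algebra_simps)
  have "(240 * s) * sd \<le> sd * sd" using big sd(1) by (intro mult_right_mono) auto
  then have sd_big: "240 * (s * sd) \<le> sd^2" by (simp add: power2_eq_square)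
  moreover have "0 < s * sd" "5*s*sd = 5 * (s * sd)" using big s by simp_all
  ultimately show "0 < sdq^2" using var u dvq dv unfolding dvq_def by linarith
  have "(N * p - dv) * (1 - q) \<le> x * (1 - q)"
    using x_lower pq by (intro mult_right_mono) (auto simp: dv_def)
  moreover have "(N * p - dv) * (1 - q) = sdq^2 + u * (1 - q) - dv * (1 - q)"
    using sdq by (simp add: u_def algebra_simps)
  moreover have "dv * (1 - q) \<le> dv" "0 \<le> u * (1 - q)"
    using pq u0 s sd by (auto simp: dv_def mult_left_le)
  moreover have "11 * (s * sd) \<le> sd^2 / 20"
    using sd_big ssd by linarith
  ultimately show "(19/20) * sd^2 \<le> x * (1 - q)"
    using var u dvq dv by (simp add: dvq_def)
qed

lemma ratio_condition_in_window:
  fixes N p q s sd sdq x y m :: real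
  assumes N: "N \<ge> 0" and pq: "0 \<le> q" "q \<le> p" "p \<le> 1" and s: "s \<ge> 1"
    and sd: "sd \<ge> 0" "sd^2 = N * (p * (1 - p))" and sdq: "sdq \<ge> 0" "sdq^2 = N * (q * (1 - q))"
    and big: "sd \<ge> 240 * s" and m: "1 \<le> m" "m \<le> sd / (30 * s)"
    and x_upper: "x < N * q + (2*s*sdq + 2*s^2)" and x_lower: "N * p - (2*s*sd + 2*s^2) \<le> x"
    and y: "x \<le> y" "y \<le> x + m - 1"
  shows "(1 - 1/(2*m)) * (y + 1) * (1 - q) \<le> (N - y) * q"
proof -
  note bounds = runner_up_window_bounds[OF N pq s sd sdq big x_upper x_lower]
  have sd0: "0 < sd" using big s by simp
  have "15 * s / sd \<le> 1 / (2*m)"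
    using m s sd0 by (simp add: field_simps)
  moreover have "x * (1 - q) \<le> (y + 1) * (1 - q)" using y pq by (intro mult_right_mono) auto
  then have "(19/20) * sd^2 \<le> (y + 1) * (1 - q)" using bounds(2) by linarith
  ultimately have "(15 * s / sd) * ((19/20) * sd^2) \<le> (1/(2*m)) * ((y + 1) * (1 - q))"
    by (rule mult_mono) (use m in auto)
  moreover have "(15 * s / sd) * ((19/20) * sd^2) = (57/4) * (s * sd)"
    using sd0 by (simp add: power2_eq_square)
  moreover have "0 \<le> s * sd" using s sd0 by simp
  ultimately have gain: "14 * (s * sd) \<le> (1/(2*m)) * ((y + 1) * (1 - q))"
    by linarith
  have "m \<le> sd / (30 * s)" by (rule m(2))
  also have "\<dots> \<le> sd" using s sd0 by (simp add: field_simps)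
  also have "\<dots> \<le> s * sd" using s sd0 by simp
  finally have "m \<le> s * sd" .
  moreover have "(N - y) * q - (1 - 1/(2*m)) * (y + 1) * (1 - q) = N * q - y - 1 + q + (1/(2*m)) * ((y + 1) * (1 - q))"
    using m by (simp add: field_simps)
  moreover have "- (2*s*sdq + 2*s^2) - m \<le> N * q - y - 1 + q"
    using y x_upper pq by simp
  moreover have "5*s*sd = 5 * (s * sd)" "0 \<le> s * sd" using s sd0 by simp_all
  ultimately show ?thesis using gain bounds(1) by linarith
qed

lemma plateau_point_mass_le:
  fixes pi phi :: "nat \<Rightarrow> real" and m M n x :: nat
  assumes m: "3 \<le> m" and pi0: "\<And>y. 0 \<le> pi y" and phi0: "\<And>y. 0 \<le> phi y"
    and mono: "\<And>x y. x \<le> y \<Longrightarrow> phi x \<le> phi y" and pi_zero: "\<And>y. n < y \<Longrightarrow> pi y = 0"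
    and x: "x \<le> M" "M \<le> x + 2" and flat: "\<forall>h\<le>m. pi x / 2 \<le> pi (x + h)"
  shows "(real m - 2) * (pi x * phi x) \<le> 2 * (\<Sum>y\<in>{M<..n}. pi y * phi y)"
proof -
  have "(real m - 2) * (pi x * phi x) / 2 = (\<Sum>h\<in>{3..m}. (pi x / 2) * phi x)"
    using m by (simp add: of_nat_diff)
  also have "\<dots> \<le> (\<Sum>h\<in>{3..m}. pi (x + h) * phi (x + h))"
    using flat by (intro sum_mono mult_mono mono) (auto simp: pi0 phi0)
  also have "\<dots> = (\<Sum>y\<in>(\<lambda>h. x + h) ` {3..m}. pi y * phi y)"
    by (subst sum.reindex) (auto simp: inj_on_def)
  also have "\<dots> \<le> (\<Sum>y\<in>{M<..M + m}. pi y * phi y)"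
    by (intro sum_mono2) (use x pi0 phi0 in auto)
  also have "\<dots> = (\<Sum>y\<in>{M<..M + m} \<inter> {..n}. pi y * phi y)"
    using pi_zero by (intro sum.mono_neutral_right) (auto, meson not_le)
  also have "\<dots> \<le> (\<Sum>y\<in>{M<..n}. pi y * phi y)"
    by (intro sum_mono2) (use pi0 phi0 in auto)
  finally show ?thesis by simp
qed

lemma plateau_mass_le:
  fixes pi phi :: "nat \<Rightarrow> real" and m M n :: nat
  assumes m: "3 \<le> m" and pi0: "\<And>y. 0 \<le> pi y" and phi0: "\<And>y. 0 \<le> phi y"
    and mono: "\<And>x y. x \<le> y \<Longrightarrow> phi x \<le> phi y" and pi_zero: "\<And>y. n < y \<Longrightarrow> pi y = 0"
  shows "(\<Sum>x\<le>n. pi x * (phi x * of_bool (x \<le> M \<and> M \<le> x + 2 \<and> (\<forall>h\<le>m. pi x / 2 \<le> pi (x + h)))))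
         \<le> (6 / (real m - 2)) * (\<Sum>y\<in>{M<..n}. pi y * phi y)"
proof -
  define R where "R = (\<Sum>y\<in>{M<..n}. pi y * phi y)"
  define G :: "nat \<Rightarrow> real"
    where "G x = of_bool (x \<le> M \<and> M \<le> x + 2 \<and> (\<forall>h\<le>m. pi x / 2 \<le> pi (x + h)))" for x
  have R0: "0 \<le> R" unfolding R_def using pi0 phi0 by (intro sum_nonneg mult_nonneg_nonneg) auto
  have m2: "0 < real m - 2" using m by simp
  have each: "pi x * (phi x * G x) \<le> 2 * R / (real m - 2)" for x
  proof (cases "x \<le> M \<and> M \<le> x + 2 \<and> (\<forall>h\<le>m. pi x / 2 \<le> pi (x + h))")
    case True
    then have "(real m - 2) * (pi x * phi x) \<le> 2 * R"
      unfolding R_def by (intro plateau_point_mass_le[OF m]) (auto intro: pi0 phi0 mono pi_zero)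
    then show ?thesis using True m2 by (simp add: G_def field_simps)
  next
    case False
    then have "G x = 0" unfolding G_def by (simp only: of_bool_eq(1))
    then show ?thesis using R0 m2 by simp
  qed
  have "(\<Sum>x\<le>n. pi x * (phi x * G x)) = (\<Sum>x\<in>{..n} \<inter> {M-2..M}. pi x * (phi x * G x))"
    by (intro sum.mono_neutral_right) (auto simp: G_def)
  also have "\<dots> \<le> (\<Sum>x\<in>{M-2..M}. pi x * (phi x * G x))"
    by (intro sum_mono2) (auto simp: pi0 phi0 G_def)
  also have "\<dots> \<le> (\<Sum>x\<in>{M-2..M}. 2 * R / (real m - 2))"
    by (intro sum_mono each)
  also have "\<dots> = real (card {M-2..M}) * (2 * R / (real m - 2))"
    by simp
  also have "\<dots> \<le> 3 * (2 * R / (real m - 2))"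
    by (intro mult_right_mono) (use R0 m2 in auto)
  finally show ?thesis unfolding G_def R_def by (simp add: field_simps)
qed

definition top_rest :: "nat \<Rightarrow> nat \<Rightarrow> nat \<Rightarrow> (nat \<Rightarrow> nat) \<Rightarrow> nat" where
  "top_rest n t j d = Max (d ` ({..n} - {j, t}))"

definition near_top :: "nat \<Rightarrow> nat \<Rightarrow> nat \<Rightarrow> (nat \<Rightarrow> nat) \<Rightarrow> bool" where
  "near_top n t j d \<longleftrightarrow> d j \<le> top_rest n t j d \<and> top_rest n t j d \<le> d j + 2 \<and> d t + 3 \<le> top_rest n t j d"

definition strict_top :: "nat \<Rightarrow> nat \<Rightarrow> nat \<Rightarrow> (nat \<Rightarrow> nat) \<Rightarrow> bool" where
  "strict_top n t j d \<longleftrightarrow> top_rest n t j d < d j \<and> d t + 3 \<le> top_rest n t j d"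

definition plateau :: "nat \<Rightarrow> real \<Rightarrow> nat \<Rightarrow> nat \<Rightarrow> bool" where
  "plateau n q m x \<longleftrightarrow> (\<forall>h\<le>m. binomial_prob n q x / 2 \<le> binomial_prob n q (x + h))"

lemma top_rest_upd: "top_rest n t j (d(j := x)) = top_rest n t j d"
  unfolding top_rest_def by (intro arg_cong[where f = Max] image_cong) auto

lemma Max_image_mono:
  fixes f g :: "'a \<Rightarrow> 'b::linorder"
  assumes "finite A" "A \<noteq> {}" "\<And>i. i \<in> A \<Longrightarrow> f i \<le> g i"
  shows "Max (f ` A) \<le> Max (g ` A)"
  using assms by (auto intro: order.trans[OF _ Max_ge])

lemma shortfall_upd_mono:
  assumes "j \<noteq> t" "1 \<le> n" "x \<le> y"
  shows "shortfall n t (d(j := x)) \<le> shortfall n t (d(j := y))"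
proof -
  have "top_other n t (d(j := x)) \<le> top_other n t (d(j := y))"
    unfolding top_other_def using atMost_Diff_singleton_ne_empty[OF assms(2)] assms(3)
    by (intro Max_image_mono) auto
  then show ?thesis unfolding shortfall_def using assms by auto
qed

lemma deg_expect_le_cmult_by_coordinate:
  assumes j: "j \<le> n" and p: "popularities n p"
    and coordinate: "\<And>d. (\<Sum>x\<le>n. binomial_prob n (p j) x * f (d(j := x)))
                         \<le> c * (\<Sum>x\<le>n. binomial_prob n (p j) x * g (d(j := x)))"
  shows "deg_expect n p f \<le> c * deg_expect n p g"
proof -
  let ?w = "\<lambda>d. \<Prod>i\<in>{..n} - {j}. binomial_prob n (p i) (d i)"
  have "deg_expect n p f = (\<Sum>d\<in>PiE ({..n} - {j}) (\<lambda>_. {..n}). ?w d * (\<Sum>x\<le>n. binomial_prob n (p j) x * f (d(j := x))))"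
    by (rule deg_expect_split[OF j])
  also have "\<dots> \<le> (\<Sum>d\<in>PiE ({..n} - {j}) (\<lambda>_. {..n}). ?w d * (c * (\<Sum>x\<le>n. binomial_prob n (p j) x * g (d(j := x)))))"
    using p by (intro sum_mono mult_left_mono coordinate prod_nonneg)
      (auto simp: popularities_def intro: binomial_prob_nonneg)
  also have "\<dots> = c * deg_expect n p g"
    unfolding deg_expect_split[OF j, of p g] by (simp add: sum_distrib_left mult_ac)
  finally show ?thesis .
qed

lemma deg_expect_near_top_plateau_le:
  assumes j: "j \<le> n" "j \<noteq> t" and n: "1 \<le> n" and m: "3 \<le> m" and p: "popularities n p"
  shows "deg_expect n p (\<lambda>d. shortfall n t d * of_bool (near_top n t j d \<and> plateau n (p j) m (d j)))
       \<le> (6 / (real m - 2)) * deg_expect n p (\<lambda>d. shortfall n t d * of_bool (strict_top n t j d))"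
proof (rule deg_expect_le_cmult_by_coordinate[OF j(1) p])
  fix d
  let ?pi = "binomial_prob n (p j)" and ?phi = "\<lambda>x. shortfall n t (d(j := x))"
  define M where "M = top_rest n t j d"
  have pj: "0 \<le> p j" "p j \<le> 1" using p j by (auto simp: popularities_def)
  have top: "top_rest n t j (d(j := x)) = M" for x by (simp add: M_def top_rest_upd)
  have tj: "t \<noteq> j" using j by simp
  show "(\<Sum>x\<le>n. ?pi x * (?phi x * of_bool (near_top n t j (d(j := x)) \<and> plateau n (p j) m ((d(j := x)) j))))
      \<le> (6 / (real m - 2)) * (\<Sum>x\<le>n. ?pi x * (?phi x * of_bool (strict_top n t j (d(j := x)))))"
  proof (cases "d t + 3 \<le> M")
    case False
    then show ?thesis
      using m pj by (simp add: near_top_def strict_top_def top tj)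
  next
    case True
    have "(\<Sum>x\<le>n. ?pi x * (?phi x * of_bool (near_top n t j (d(j := x)) \<and> plateau n (p j) m ((d(j := x)) j))))
        = (\<Sum>x\<le>n. ?pi x * (?phi x * of_bool (x \<le> M \<and> M \<le> x + 2 \<and> (\<forall>h\<le>m. ?pi x / 2 \<le> ?pi (x + h)))))"
      using True by (simp add: near_top_def plateau_def top tj)
    also have "\<dots> \<le> (6 / (real m - 2)) * (\<Sum>y\<in>{M<..n}. ?pi y * ?phi y)"
      by (rule plateau_mass_le[OF m])
        (use pj j n in \<open>auto intro: binomial_prob_nonneg shortfall_nonneg shortfall_upd_mono binomial_prob_eq_0\<close>)
    also have "(\<Sum>y\<in>{M<..n}. ?pi y * ?phi y) = (\<Sum>x\<le>n. ?pi x * (?phi x * of_bool (strict_top n t j (d(j := x)))))"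
    proof -
      have "{..n} \<inter> {x. M < x} = {M<..n}" by auto
      then show ?thesis using True by (simp add: strict_top_def top tj mult.assoc[symmetric])
    qed
    finally show ?thesis .
  qed
qed

lemma strict_top_unique:
  assumes "a \<le> n" "b \<le> n" "a \<noteq> t" "b \<noteq> t" "strict_top n t a d" "strict_top n t b d"
  shows "a = b"
proof (rule ccontr)
  assume ab: "a \<noteq> b"
  have "d b \<le> top_rest n t a d" "d a \<le> top_rest n t b d"
    unfolding top_rest_def using assms ab by (auto intro: Max_ge)
  then show False using assms by (auto simp: strict_top_def)
qed

lemma sum_strict_top_le_1: "(\<Sum>j\<in>{..n} - {t}. of_bool (strict_top n t j d)) \<le> (1::real)"
proof -
  have "card (({..n} - {t}) \<inter> {j. strict_top n t j d}) \<le> 1"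
    using strict_top_unique[of _ n _ t d] by (auto simp: card_le_Suc0_iff_eq)
  then show ?thesis by simp
qed

lemma near_tie_imp_near_top:
  assumes "near_tie n t d"
  obtains j where "j \<le> n" "j \<noteq> t" "near_top n t j d" "d t < d j"
proof -
  obtain j k where jk: "j \<le> n" "k \<le> n" "j \<noteq> t" "k \<noteq> t" "j \<noteq> k" "d k = top_other n t d"
    "top_other n t d \<le> d j + 2" "d t + 3 \<le> top_other n t d"
    using assms unfolding near_tie_def by blast
  have "top_rest n t j d = top_other n t d"
  proof (rule antisym)
    show "top_rest n t j d \<le> top_other n t d"
      unfolding top_rest_def top_other_def using jk by (intro Max_mono) auto
    have "d k \<le> top_rest n t j d"
      unfolding top_rest_def using jk(2,4,5) by (intro Max_ge) auto
    then show "top_other n t d \<le> top_rest n t j d" using jk by simp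
  qed
  moreover have "d j \<le> top_other n t d" using jk by (intro le_top_other)
  ultimately show ?thesis using that jk unfolding near_top_def by simp
qed

lemma plateau_if_typical:
  assumes j: "j \<le> n" and t: "t \<le> n" and p: "popularities n p" and p_max: "\<forall>j\<le>n. p j \<le> p t"
    and s: "1 \<le> s" and big: "240 * s \<le> binomial_sd n (p t)"
    and m: "1 \<le> m" "real m \<le> binomial_sd n (p t) / (30 * s)"
    and d_typical: "typical n p t s d" and above: "d t < d j"
  shows "plateau n (p j) m (d j)"
proof -
  have qj: "0 \<le> p j" "p j \<le> p t" "p t \<le> 1" and qt: "0 \<le> p t"
    using p p_max j t by (auto simp: popularities_def)
  have upper: "real (d j) < real n * p j + (2*s*binomial_sd n (p j) + 2*s^2)"
    using d_typical j unfolding typical_def deviation_def by blast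
  have lower: "real n * p t - (2*s*binomial_sd n (p t) + 2*s^2) \<le> real (d j)"
    using d_typical above unfolding typical_def deviation_def by simp
  note sds = binomial_sd_nonneg[OF qt qj(3)] binomial_sd_sq[OF qt qj(3)]
    binomial_sd_nonneg[OF qj(1) order.trans[OF qj(2,3)]] binomial_sd_sq[OF qj(1) order.trans[OF qj(2,3)]]
  have "0 < (binomial_sd n (p j))^2"
    using runner_up_window_bounds(3)[OF _ qj s sds big upper lower] by simp
  then have "0 < p j * (1 - p j)"
    using binomial_sd_sq[of "p j" n] qj by (simp add: zero_less_mult_iff)
  then have q: "0 < p j" "p j < 1"
    using qj by (auto simp: zero_less_mult_iff)
  show ?thesis
    unfolding plateau_def
  proof (intro allI impI)
    fix h assume h: "h \<le> m"
    show "binomial_prob n (p j) (d j) / 2 \<le> binomial_prob n (p j) (d j + h)"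
    proof (rule binomial_prob_plateau_from_ratio[OF q, of "1 / (2 * real m)" m])
      fix y assume "d j \<le> y" "y < d j + m"
      then show "(1 - 1 / (2 * real m)) * (real y + 1) * (1 - p j) \<le> (real n - real y) * p j"
        by (intro ratio_condition_in_window[OF _ qj s sds big _ m(2) upper lower]) (use m in auto)
    qed (use m h in auto)
  qed
qed

lemma tie_shortfall_le:
  assumes d: "d \<in> deg_vectors n" and t: "t \<le> n" and n: "1 \<le> n" and p: "popularities n p"
    and p_max: "\<forall>j\<le>n. p j \<le> p t" and s: "1 \<le> s" and big: "240 * s \<le> binomial_sd n (p t)"
    and m: "1 \<le> m" "real m \<le> binomial_sd n (p t) / (30 * s)"
  shows "tie_shortfall n t d \<le> real n * of_bool (\<not> typical n p t s d)
            + (\<Sum>j\<in>{..n} - {t}. shortfall n t d * of_bool (near_top n t j d \<and> plateau n (p j) m (d j)))"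
    (is "_ \<le> _ + ?S")
proof -
  have S0: "0 \<le> ?S" by (intro sum_nonneg mult_nonneg_nonneg) (auto simp: shortfall_nonneg)
  show ?thesis
  proof (cases "typical n p t s d \<and> near_tie n t d")
    case False
    have "tie_shortfall n t d \<le> real n * of_bool (\<not> typical n p t s d)"
      using False shortfall_le_n[OF d t n] by (cases "typical n p t s d") (auto simp: tie_shortfall_def)
    then show ?thesis using S0 by linarith
  next
    case True
    then obtain j where j: "j \<le> n" "j \<noteq> t" "near_top n t j d" "d t < d j"
      using near_tie_imp_near_top by blast
    then have "plateau n (p j) m (d j)"
      using plateau_if_typical[OF _ t p p_max s big m] True by blast
    then have "tie_shortfall n t d = shortfall n t d * of_bool (near_top n t j d \<and> plateau n (p j) m (d j))"
      using True j by (simp add: tie_shortfall_def)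
    also have "\<dots> \<le> ?S"
      by (rule member_le_sum) (use j in \<open>auto intro: mult_nonneg_nonneg shortfall_nonneg\<close>)
    finally show ?thesis using True by simp
  qed
qed

lemma plateau_width_bounds:
  fixes sd s :: real and m :: nat
  assumes s: "s \<ge> 1" and big: "sd \<ge> 240 * s" and m: "m = nat \<lfloor>sd / (30 * s)\<rfloor>"
  shows "real m \<le> sd / (30 * s)" "m \<ge> 8" "6 / (real m - 2) \<le> 480 * s / sd"
proof -
  define r where "r = sd / (30 * s)"
  have sd0: "sd > 0" using s big by simp
  have r8: "r \<ge> 8" using big s by (simp add: r_def field_simps)
  have fl: "real_of_int \<lfloor>r\<rfloor> \<le> r" "r < real_of_int \<lfloor>r\<rfloor> + 1" by linarith+
  have fl0: "\<lfloor>r\<rfloor> \<ge> 0" using r8 by linarith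
  have mr: "real m = real_of_int \<lfloor>r\<rfloor>" using m fl0 by (simp add: r_def)
  show "real m \<le> sd / (30 * s)" using mr fl by (simp add: r_def)
  have "real m > 7" using mr fl r8 by linarith
  then show m8: "m \<ge> 8" by simp
  have a: "6 / (real m - 2) \<le> 8 / real m" using m8 by (simp add: field_simps)
  have b: "8 / real m \<le> 16 / r"
  proof -
    have "r \<le> 2 * real m" using mr fl r8 by linarith
    then show ?thesis using m8 r8 by (simp add: field_simps)
  qed
  have c: "16 / r = 480 * s / sd" using s sd0 by (simp add: r_def field_simps)
  show "6 / (real m - 2) \<le> 480 * s / sd" using a b c by linarith
qed

lemma plateau_width_arith:
  fixes s sd c :: real
  assumes s: "s \<ge> 1" and big: "sd \<ge> 240 * s" and c: "0 \<le> c" "c \<le> 480 * s / sd"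
  shows "c * (5 * s * sd + 5 * s^2 + 1) \<le> 2410 * s^2 + 2"
proof -
  have sd0: "sd > 0" using s big by simp
  define k where "k = s / sd"
  have k1: "k \<le> 1/240" using big s sd0 by (simp add: k_def field_simps)
  have ks: "k * sd = s" using sd0 by (simp add: k_def)
  have "c * (5 * s * sd + 5 * s^2 + 1) \<le> (480 * k) * (5 * s * sd + 5 * s^2 + 1)"
    using c s sd0 by (intro mult_right_mono) (auto simp: k_def)
  also have "\<dots> = 2400 * s * (k * sd) + 2400 * s^2 * k + 480 * k" by (simp add: algebra_simps)
  also have "\<dots> = 2400 * s^2 + 2400 * s^2 * k + 480 * k" using ks by (simp add: power2_eq_square)
  also have "\<dots> \<le> 2400 * s^2 + 2400 * s^2 * (1/240) + 480 * (1/240)"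
    using k1 by (intro add_mono mult_left_mono) auto
  finally show ?thesis by simp
qed

lemma deg_expect_tie_shortfall_le_plateau:
  assumes p: "popularities n p" and t: "t \<le> n" and n: "1 \<le> n" and p_max: "\<forall>j\<le>n. p j \<le> p t"
    and s: "1 \<le> s" and big: "240 * s \<le> binomial_sd n (p t)"
    and m: "3 \<le> m" "real m \<le> binomial_sd n (p t) / (30 * s)"
  shows "deg_expect n p (tie_shortfall n t)
     \<le> real n * ((real n + 2) * exp (-(s^2))) + 6 / (real m - 2) * deg_expect n p (shortfall n t)"
proof -
  let ?c = "6 / (real m - 2)"
  let ?near = "\<lambda>j d. shortfall n t d * of_bool (near_top n t j d \<and> plateau n (p j) m (d j))"
  have "(\<Sum>j\<in>{..n} - {t}. deg_expect n p (?near j))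
      \<le> (\<Sum>j\<in>{..n} - {t}. ?c * deg_expect n p (\<lambda>d. shortfall n t d * of_bool (strict_top n t j d)))"
    using m by (intro sum_mono deg_expect_near_top_plateau_le p n) auto
  also have "\<dots> = ?c * deg_expect n p (\<lambda>d. shortfall n t d * (\<Sum>j\<in>{..n} - {t}. of_bool (strict_top n t j d)))"
    by (simp only: deg_expect_sum[OF finite_Diff[OF finite_atMost]] sum_distrib_left)
  also have "\<dots> \<le> ?c * deg_expect n p (shortfall n t)"
    using m sum_strict_top_le_1 shortfall_nonneg
    by (intro mult_left_mono deg_expect_mono[OF p]) (auto intro: mult_left_le)
  finally have near: "(\<Sum>j\<in>{..n} - {t}. deg_expect n p (?near j)) \<le> ?c * deg_expect n p (shortfall n t)" .
  have "deg_expect n p (tie_shortfall n t)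
      \<le> deg_expect n p (\<lambda>d. real n * of_bool (\<not> typical n p t s d) + (\<Sum>j\<in>{..n} - {t}. ?near j d))"
    using m by (intro deg_expect_mono[OF p] tie_shortfall_le[OF _ t n p p_max s big]) auto
  also have "\<dots> = real n * deg_expect n p (\<lambda>d. of_bool (\<not> typical n p t s d))
      + (\<Sum>j\<in>{..n} - {t}. deg_expect n p (?near j))"
    by (simp only: deg_expect_add deg_expect_cmult deg_expect_sum[OF finite_Diff[OF finite_atMost]])
  also have "\<dots> \<le> real n * ((real n + 2) * exp (-(s^2))) + ?c * deg_expect n p (shortfall n t)"
    using s near by (intro add_mono mult_left_mono deg_expect_not_typical_le p t) auto
  finally show ?thesis .
qed

lemma deg_expect_tie_shortfall_le:
  assumes p: "popularities n p" and t: "t \<le> n" and n: "1 \<le> n" and p_max: "\<forall>j\<le>n. p j \<le> p t"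
    and s: "1 \<le> s" and rare: "real n * ((real n + 2) * exp (-(s^2))) \<le> 1"
  shows "deg_expect n p (tie_shortfall n t) \<le> 2410 * s^2 + 3"
proof -
  define sd where "sd = binomial_sd n (p t)"
  have shortfall: "deg_expect n p (shortfall n t) \<le> 5 * s * sd + 5 * s^2 + 1"
    unfolding sd_def using deg_expect_shortfall_le[OF p t n p_max _ rare] s by simp
  show ?thesis
  proof (cases "sd < 240 * s")
    case True
    have "5 * s * sd \<le> 5 * s * (240 * s)"
      using True s by (intro mult_left_mono) auto
    then have "deg_expect n p (shortfall n t) \<le> 1205 * s^2 + 1"
      using shortfall by (simp add: power2_eq_square)
    moreover have "deg_expect n p (tie_shortfall n t) \<le> deg_expect n p (shortfall n t)"
      by (rule deg_expect_mono[OF p]) (simp add: tie_shortfall_def shortfall_nonneg)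
    ultimately show ?thesis using zero_le_power2[of s] by linarith
  next
    case False
    then have big: "240 * s \<le> sd" by simp
    define m where "m = nat \<lfloor>sd / (30 * s)\<rfloor>"
    note width = plateau_width_bounds[OF s big m_def]
    have c: "0 \<le> 6 / (real m - 2)" using width(2) by simp
    have "deg_expect n p (tie_shortfall n t) \<le> 1 + 6 / (real m - 2) * deg_expect n p (shortfall n t)"
      using deg_expect_tie_shortfall_le_plateau[OF p t n p_max s _ _ width(1)[unfolded sd_def]] big width(2) rare
      by (simp add: sd_def)
    also have "6 / (real m - 2) * deg_expect n p (shortfall n t) \<le> 6 / (real m - 2) * (5 * s * sd + 5 * s^2 + 1)"
      using shortfall c by (rule mult_left_mono)
    also have "\<dots> \<le> 2410 * s^2 + 2"
      by (rule plateau_width_arith[OF s big c width(3)])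
    finally show ?thesis by simp
  qed
qed

lemma one_le_ln: "3 \<le> n \<Longrightarrow> 1 \<le> ln (real n)"
  using exp_le by (subst ln_ge_iff) auto

lemma avd_expected_gap_le_ln:
  assumes n: "3 \<le> n" and p: "popularities n p" and t: "t \<le> n" and p_max: "\<forall>j\<le>n. p j \<le> p t"
  shows "avd_expected_gap n p t \<le> 7230 * ln (real n) + 5"
proof -
  have ln_n: "1 \<le> ln (real n)"
    using n by (rule one_le_ln)
  define s where "s = sqrt (3 * ln (real n))"
  have s2: "s^2 = 3 * ln (real n)" and s: "1 \<le> s"
    using ln_n by (auto simp: s_def real_le_rsqrt)
  have "exp (3 * ln (real n)) = real n ^ 3"
    using n exp_of_nat_mult[of 3 "ln (real n)"] by simp
  then have "exp (-(s^2)) = 1 / real n ^ 3"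
    by (simp add: s2 exp_minus inverse_eq_divide)
  moreover have "real n * (real n + 2) \<le> real n ^ 3"
  proof -
    have "3 * real n \<le> real n * real n" using n by (intro mult_right_mono) auto
    then have "real n + 2 \<le> real n * real n" using n by linarith
    then have "real n * (real n + 2) \<le> real n * (real n * real n)" by (simp add: mult_left_mono)
    then show ?thesis by (simp add: power3_eq_cube mult.assoc)
  qed
  ultimately have rare: "real n * ((real n + 2) * exp (-(s^2))) \<le> 1"
    using n by (simp add: pos_divide_le_eq)
  have "avd_expected_gap n p t \<le> 2 + deg_expect n p (tie_shortfall n t)"
    using avd_expected_gap_le[OF p t] n by simp
  also have "\<dots> \<le> 2 + (2410 * s^2 + 3)"
    using deg_expect_tie_shortfall_le[OF p t _ p_max s rare] n by simp
  finally show ?thesis by (simp add: s2)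
qed

theorem mainTheorem4:
  "\<exists>C::real. \<exists>n0::nat. \<forall>n \<ge> n0. \<forall>(p :: nat \<Rightarrow> real) (t :: nat).
     (\<forall>j \<in> agents n. 0 \<le> p j \<and> p j \<le> 1) \<longrightarrow>
     t \<in> agents n \<longrightarrow> (\<forall>j \<in> agents n. p j \<le> p t) \<longrightarrow>
     avd_expected_gap n p t \<le> C * (ln (real n))^2"
proof (intro exI allI impI)
  fix n :: nat and p :: "nat \<Rightarrow> real" and t :: nat
  assume n: "3 \<le> n" and p: "\<forall>j \<in> agents n. 0 \<le> p j \<and> p j \<le> 1"
    and t: "t \<in> agents n" and p_max: "\<forall>j \<in> agents n. p j \<le> p t"
  have ln_n: "1 \<le> ln (real n)"
    using n by (rule one_le_ln)
  have "avd_expected_gap n p t \<le> 7230 * ln (real n) + 5"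
    using avd_expected_gap_le_ln[OF n] p t p_max by (simp add: popularities_def agents_def)
  also have "\<dots> \<le> 8000 * (ln (real n))^2"
  proof -
    have "ln (real n) \<le> ln (real n) * ln (real n)" "1 \<le> ln (real n) * ln (real n)"
      using ln_n mult_mono[OF ln_n ln_n] mult_right_mono[OF ln_n, of "ln (real n)"] by auto
    then show ?thesis by (simp add: power2_eq_square)
  qed
  finally show "avd_expected_gap n p t \<le> 8000 * (ln (real n))^2" .
qed

end
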